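(* Let $m\ge1$ and $\mathfrak{g}_m=\mathfrak{sl}(2)\ltimes V(m)$ with $\mathfrak{r}=V(m)$. Let $V=V(a_0)\oplus\cdots\oplus V(a_\ell)$ and $W=V(b_0)\oplus\cdots\oplus V(b_{\ell'})$, with $\ell,\ell'\ge1$, be the socle decompositions of two uniserial $\mathfrak{g}_m$-modules, and for $t\ge0$ set $S_t=\big(\bigoplus_{i+j=t}V(a_i)\otimes V(b_j)\big)^{\mathfrak{r}}$ (the vectors annihilated by $\mathfrak{r}$). If $t>\min\{\ell,\ell'\}$ then $S_t=0$. If $0<t\le\min\{\ell,\ell'\}$ and $\mu$ is a highest weight occurring in $S_t$ (i.e. $S_t$ contains a highest weight vector of weight $\mu$), then $\mu$ is a highest weight of an irreducible $\mathfrak{sl}(2)$-summand of each $V(a_i)\otimes V(b_{t-i})$, $i=0,\dots,t$; moreover the space of vectors of $S_t$ of weight $\mu$ annihilated by $e$ is one-dimensional and is spanned by a linear combination $\sum_{i=0}^t q_i\,v_0^{a_i,b_{t-i},\mu}$ with $q_i\ne0$ for all $i=0,\dots,t$, where $v_0^{a,b,\mu}$ denotes a (fixed) highest weight vector of weight $\mu$ in $V(a)\otimes V(b)$.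
   Context: $\mathbb{F}$ is a field of characteristic zero; all modules are finite dimensional. $V(a)$ is the irreducible $\mathfrak{sl}(2)$-module of highest weight $a$; $\mathfrak{g}_m=\mathfrak{sl}(2)\ltimes V(m)$ with $\mathfrak{r}=V(m)$ an abelian ideal. A uniserial module is one with a unique composition series. A socle decomposition of a uniserial $\mathfrak{g}_m$-module $V$ of length $\ell+1$ is a decomposition $V=V(a_0)\oplus\cdots\oplus V(a_\ell)$ into irreducible $\mathfrak{sl}(2)$-submodules with $\mathrm{soc}^{k}(V)=V(a_0)\oplus\cdots\oplus V(a_{k-1})$ for all $k$. Since $V(a)\otimes V(b)\cong\bigoplus_{k=0}^{\min(a,b)}V(a+b-2k)$ is multiplicity free, a highest weight vector of weight $\mu$ in $V(a)\otimes V(b)$ is unique up to scalar when it exists. *)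

theory Defs
  imports "HOL-Analysis.Analysis"
begin

text \<open>Finite-dimensional modules are modelled concretely: an F-vector space of
dimension CARD('n) is the coordinate space 'a^'n, and linear operators are
square matrices acting by the matrix-vector product. The tensor product of
'a^'i and 'a^'j is 'a^('i \<times> 'j).\<close>

definition hw_vec :: "'a::field^'n^'n \<Rightarrow> 'a^'n^'n \<Rightarrow> nat \<Rightarrow> 'a^'n \<Rightarrow> bool" where
  "hw_vec E H \<mu> v \<longleftrightarrow> v \<noteq> 0 \<and> E *v v = 0 \<and> H *v v = of_nat \<mu> *s v"

definition inv_sub :: "('a::field^'n^'n) set \<Rightarrow> ('a^'n) set \<Rightarrow> bool" where
  "inv_sub Ops U \<longleftrightarrow> vec.subspace U \<and> (\<forall>A\<in>Ops. \<forall>v\<in>U. A *v v \<in> U)"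

definition irred_sl2 :: "'a::field^'n^'n \<Rightarrow> 'a^'n^'n \<Rightarrow> 'a^'n^'n \<Rightarrow> ('a^'n) set \<Rightarrow> bool" where
  "irred_sl2 E H F U \<longleftrightarrow> inv_sub {E, H, F} U \<and> U \<noteq> {0} \<and>
     (\<forall>U'. inv_sub {E, H, F} U' \<and> U' \<subseteq> U \<longrightarrow> U' = {0} \<or> U' = U)"

text \<open>Irreducible sl(2)-submodule isomorphic to V(a), i.e. of highest weight a.\<close>
definition irred_hw :: "'a::field^'n^'n \<Rightarrow> 'a^'n^'n \<Rightarrow> 'a^'n^'n \<Rightarrow> nat \<Rightarrow> ('a^'n) set \<Rightarrow> bool" where
  "irred_hw E H F a U \<longleftrightarrow> irred_sl2 E H F U \<and> (\<exists>v\<in>U. hw_vec E H a v)"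

text \<open>A representation of g_m = sl(2) \<ltimes> V(m) on 'a^'n: matrices for e, h, f and
for the basis x_0, ..., x_m of V(m), where (in g_m) [h,x_k] = (m-2k) x_k,
[f,x_k] = x_{k+1} (x_{m+1} = 0), [e,x_k] = k(m-k+1) x_{k-1}, [x_j,x_k] = 0.\<close>
record ('a, 'n) gmod =
  gE :: "'a^'n^'n"
  gH :: "'a^'n^'n"
  gF :: "'a^'n^'n"
  gX :: "nat \<Rightarrow> 'a^'n^'n"

definition br :: "'a::comm_ring_1^'n^'n \<Rightarrow> 'a^'n^'n \<Rightarrow> 'a^'n^'n" where
  "br A B = A ** B - B ** A"

definition msc :: "'a::times \<Rightarrow> 'a^'n^'n \<Rightarrow> 'a^'n^'n" where
  "msc c A = (\<chi> i j. c * A $ i $ j)"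

definition is_gm_module :: "nat \<Rightarrow> ('a::field, 'n::finite) gmod \<Rightarrow> bool" where
  "is_gm_module m M \<longleftrightarrow>
     br (gH M) (gE M) = msc 2 (gE M) \<and>
     br (gH M) (gF M) = msc (-2) (gF M) \<and>
     br (gE M) (gF M) = gH M \<and>
     (\<forall>k\<le>m. br (gH M) (gX M k) = msc (of_int (int m - 2 * int k)) (gX M k)) \<and>
     (\<forall>k\<le>m. br (gF M) (gX M k) = (if k = m then 0 else gX M (Suc k))) \<and>
     (\<forall>k\<le>m. br (gE M) (gX M k) =
        (if k = 0 then 0 else msc (of_nat (k * (m - k + 1))) (gX M (k - 1)))) \<and>
     (\<forall>j\<le>m. \<forall>k\<le>m. br (gX M j) (gX M k) = 0)"

definition gm_ops :: "nat \<Rightarrow> ('a, 'n::finite) gmod \<Rightarrow> ('a^'n^'n) set" where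
  "gm_ops m M = {gE M, gH M, gF M} \<union> gX M ` {..m}"

definition gsub :: "nat \<Rightarrow> ('a::field, 'n::finite) gmod \<Rightarrow> ('a^'n) set \<Rightarrow> bool" where
  "gsub m M U \<longleftrightarrow> inv_sub (gm_ops m M) U"

definition comp_series :: "nat \<Rightarrow> ('a::field, 'n::finite) gmod \<Rightarrow> ('a^'n) set list \<Rightarrow> bool" where
  "comp_series m M Us \<longleftrightarrow> Us \<noteq> [] \<and> hd Us = {0} \<and> last Us = UNIV \<and>
     (\<forall>U\<in>set Us. gsub m M U) \<and>
     (\<forall>k < length Us - 1. Us ! k \<subset> Us ! Suc k \<and>
        (\<forall>U. gsub m M U \<and> Us ! k \<subseteq> U \<and> U \<subseteq> Us ! Suc k \<longrightarrow> U = Us ! k \<or> U = Us ! Suc k))"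

definition uniserial :: "nat \<Rightarrow> ('a::field, 'n::finite) gmod \<Rightarrow> bool" where
  "uniserial m M \<longleftrightarrow> (\<exists>!Us. comp_series m M Us)"

text \<open>Socle series: soc^0 = 0 and soc^{k+1} is the preimage of soc(V/soc^k), i.e.
soc^k plus all submodules U \<supseteq> soc^k with U/soc^k irreducible.\<close>
definition socle_step :: "nat \<Rightarrow> ('a::field, 'n::finite) gmod \<Rightarrow> ('a^'n) set \<Rightarrow> ('a^'n) set" where
  "socle_step m M N = vec.span (N \<union> \<Union>{U. gsub m M U \<and> N \<subset> U \<and>
       (\<forall>U'. gsub m M U' \<and> N \<subseteq> U' \<and> U' \<subseteq> U \<longrightarrow> U' = N \<or> U' = U)})"

definition soc :: "nat \<Rightarrow> ('a::field, 'n::finite) gmod \<Rightarrow> nat \<Rightarrow> ('a^'n) set" where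
  "soc m M k = (socle_step m M ^^ k) {0}"

definition is_dsum :: "(nat \<Rightarrow> ('a::field^'n) set) \<Rightarrow> nat \<Rightarrow> ('a^'n) set \<Rightarrow> bool" where
  "is_dsum A l S \<longleftrightarrow> (\<forall>i\<le>l. A i \<subseteq> S) \<and>
     (\<forall>v\<in>S. \<exists>!u. (\<forall>i\<le>l. u i \<in> A i) \<and> (\<forall>i>l. u i = 0) \<and> v = (\<Sum>i\<le>l. u i))"

text \<open>Socle decomposition V = V(a_0) \<oplus> ... \<oplus> V(a_l) into irreducible sl(2)-submodules
A i of highest weight a i, with soc^k = A 0 \<oplus> ... \<oplus> A (k-1).\<close>
definition socle_decomp :: "nat \<Rightarrow> ('a::field, 'n::finite) gmod \<Rightarrow> nat \<Rightarrow> (nat \<Rightarrow> nat)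
    \<Rightarrow> (nat \<Rightarrow> ('a^'n) set) \<Rightarrow> bool" where
  "socle_decomp m M l a A \<longleftrightarrow> is_dsum A l UNIV \<and>
     (\<forall>i\<le>l. irred_hw (gE M) (gH M) (gF M) (a i) (A i)) \<and>
     (\<forall>k\<le>Suc l. soc m M k = vec.span (\<Union>i<k. A i))"

definition tvec :: "'a::times^'i \<Rightarrow> 'a^'j \<Rightarrow> 'a^('i \<times> 'j)" where
  "tvec u w = (\<chi> p. u $ fst p * w $ snd p)"

text \<open>The operator A \<otimes> 1 + 1 \<otimes> B on V \<otimes> W.\<close>
definition tmat :: "'a::monoid_add^'i^'i \<Rightarrow> 'a^'j^'j \<Rightarrow> 'a^('i \<times> 'j)^('i \<times> 'j)" where
  "tmat A B = (\<chi> p q. (if snd p = snd q then A $ fst p $ fst q else 0) +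
                      (if fst p = fst q then B $ snd p $ snd q else 0))"

definition tsub :: "('a::field^'i) set \<Rightarrow> ('a^'j) set \<Rightarrow> ('a^('i \<times> 'j)) set" where
  "tsub U U' = vec.span {tvec u w | u w. u \<in> U \<and> w \<in> U'}"

text \<open>S_t = (\<oplus>_{i+j=t} V(a_i) \<otimes> V(b_j))^r.\<close>
definition S_space :: "nat \<Rightarrow> ('a::field, 'i::finite) gmod \<Rightarrow> ('a, 'j::finite) gmod
    \<Rightarrow> (nat \<Rightarrow> ('a^'i) set) \<Rightarrow> (nat \<Rightarrow> ('a^'j) set) \<Rightarrow> nat \<Rightarrow> nat \<Rightarrow> nat \<Rightarrow> ('a^('i \<times> 'j)) set" where
  "S_space m M N A B l l' t =
     {T \<in> vec.span (\<Union>{tsub (A i) (B j) | i j. i \<le> l \<and> j \<le> l' \<and> i + j = t}).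
        \<forall>k\<le>m. tmat (gX M k) (gX N k) *v T = 0}"

end

(* Every T in S_t splits into components T_i in V(a_i) \<otimes> V(b_(t-i)). Projecting the equations
   X_k T = 0 (X_k a basis of r) onto V(a_(i-1)) \<otimes> V(b_(t-i)) relates T_i and T_(i-1). The socle
   structure makes the maps induced by r from the layer V(a_i) to V(a_(i-1)) jointly injective:
   their common kernel is an sl(2)-submodule of V(a_i), and if it were all of V(a_i), then
   soc^(i-1) + V(a_i) would be a submodule with simple quotient, forcing V(a_i) into soc^i.
   Hence a single vanishing component forces T = 0, and S_t = 0 as soon as some component lies
   outside the range of the decompositions. For a highest weight vector T of weight mu every
   component is a highest weight vector of weight mu in V(a_i) \<otimes> V(b_(t-i)), which is unique up
   to scalars; so T_0 determines T, the weight space is one-dimensional, and all coefficients q_i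
   are nonzero. *)

theory Submission
  imports Defs
begin

lemma matrix_vector_mult_msc: "msc c A *v v = c *s (A *v (v::'a::field^'n))"
  by (simp add: vec_eq_iff matrix_vector_mult_def msc_def sum_distrib_left mult.assoc)

lemma matrix_vector_mult_br: "br A B *v v = A *v (B *v v) - B *v (A *v (v::'a::field^'n))"
  by (simp add: br_def matrix_vector_mult_diff_rdistrib matrix_vector_mul_assoc)

lemma eigenvectors_sum_eq_0:
  fixes H :: "'a::field^'n^'n"
  assumes "finite S" "\<And>j. j \<in> S \<Longrightarrow> H *v w j = c j *s w j" "inj_on c S" "sum w S = 0"
  shows "\<forall>j\<in>S. w j = 0"
  using assms
proof (induction S arbitrary: w rule: finite_induct)
  case empty
  then show ?case by simp
next
  case (insert x S)
  have "0 = H *v sum w (insert x S) - c x *s sum w (insert x S)"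
    using insert.prems(3) by simp
  also have "\<dots> = (\<Sum>j\<in>insert x S. (c j - c x) *s w j)"
    using insert.prems(1)
    by (simp add: vec.sum vec.scale_sum_right vec.scale_left_diff_distrib sum_subtractf)
  also have "\<dots> = (\<Sum>j\<in>S. (c j - c x) *s w j)"
    using insert.hyps by simp
  finally have "(\<Sum>j\<in>S. (c j - c x) *s w j) = 0" ..
  moreover have "H *v ((c j - c x) *s w j) = c j *s ((c j - c x) *s w j)" if "j \<in> S" for j
  proof -
    have "H *v w j = c j *s w j"
      using insert.prems(1) that by simp
    then show ?thesis
      by (simp only: vector_scalar_commute vector_smult_assoc mult.commute)
  qed
  moreover have "inj_on c S"
    using insert.prems(2) by (auto simp: inj_on_def)
  ultimately have "\<forall>j\<in>S. (c j - c x) *s w j = 0"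
    using insert.IH[of "\<lambda>j. (c j - c x) *s w j"] by blast
  moreover have "c j \<noteq> c x" if "j \<in> S" for j
    using insert.prems(2) insert.hyps(2) that by (auto simp: inj_on_def)
  ultimately have "\<forall>j\<in>S. w j = 0"
    by auto
  with insert.prems(3) insert.hyps show ?case
    by simp
qed

lemma card_eigenvectors_le:
  fixes H :: "'a::field^'n::finite^'n"
  assumes "finite S" "inj_on c S"
    and "\<And>j. j \<in> S \<Longrightarrow> H *v w j = c j *s w j" "\<And>j. j \<in> S \<Longrightarrow> w j \<noteq> 0"
  shows "card S \<le> CARD('n)"
proof -
  have inj: "inj_on w S"
  proof (rule inj_onI)
    fix i j assume "i \<in> S" "j \<in> S" "w i = w j"
    then have "c i *s w i = c j *s w i"
      using assms(3) by metis
    then show "i = j"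
      using assms(2,4) \<open>i \<in> S\<close> \<open>j \<in> S\<close> by (auto simp: vector_mul_rcancel inj_on_def)
  qed
  have "vec.independent (w ` S)"
    unfolding vec.independent_explicit
  proof (intro conjI allI impI ballI)
    fix u y assume "(\<Sum>x\<in>w ` S. u x *s x) = 0" "y \<in> w ` S"
    then have "(\<Sum>j\<in>S. u (w j) *s w j) = 0"
      by (simp add: sum.reindex[OF inj])
    moreover have "H *v (u (w j) *s w j) = c j *s (u (w j) *s w j)" if "j \<in> S" for j
      using assms(3)[OF that] by (simp add: vector_scalar_commute mult.commute)
    ultimately have "\<forall>j\<in>S. u (w j) *s w j = 0"
      using eigenvectors_sum_eq_0[of S H "\<lambda>j. u (w j) *s w j" c] assms(1,2) by blast
    then show "u y = 0"
      using assms(4) \<open>y \<in> w ` S\<close> by auto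
  qed (use assms(1) in simp)
  then have "card (w ` S) \<le> CARD('n)"
    using vec.independent_bound_general dim_subset_UNIV_cart_gen order_trans by blast
  then show ?thesis
    using card_image[OF inj] by simp
qed

lemma span_image_explicit:
  assumes "x \<in> vec.span (g ` S)" "finite S"
  shows "\<exists>\<alpha>. x = (\<Sum>j\<in>S. \<alpha> j *s g j)"
  using assms(1)
proof (induction rule: vec.span_induct_alt)
  case base
  show ?case
    by (rule exI[of _ "\<lambda>_. 0"]) simp
next
  case (step c x y)
  then obtain \<alpha> j0 where "y = (\<Sum>j\<in>S. \<alpha> j *s g j)" "j0 \<in> S" "x = g j0"
    by blast
  then have "c *s x + y = (\<Sum>j\<in>S. ((if j = j0 then c else 0) + \<alpha> j) *s g j)"
    using assms(2)
    by (simp add: vec.scale_left_distrib sum.distrib if_distrib[of "\<lambda>a. a *s _"] cong: if_cong)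
  then show ?case
    by (rule exI[of _ "\<lambda>j. (if j = j0 then c else 0) + \<alpha> j"])
qed

lemma mv_in_span:
  assumes "\<And>g. g \<in> G \<Longrightarrow> A *v g \<in> vec.span G'" "x \<in> vec.span G"
  shows "A *v x \<in> vec.span G'"
  using assms(2)
  by (induction rule: vec.span_induct_alt)
    (simp_all add: assms(1) vec.add vec.scale vec.span_add vec.span_scale vec.span_zero)

section \<open>Strings generated by highest weight vectors\<close>

definition mv_iter :: "'a::semiring_1^'n^'n \<Rightarrow> nat \<Rightarrow> 'a^'n \<Rightarrow> 'a^'n" where
  "mv_iter A j v = ((*v) A ^^ j) v"

lemma mv_iter_0 [simp]: "mv_iter A 0 v = v"
  and mv_iter_Suc [simp]: "mv_iter A (Suc j) v = A *v mv_iter A j v"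
  by (simp_all add: mv_iter_def)

lemma mv_iter_Suc_right: "mv_iter A (Suc j) v = mv_iter A j (A *v v)"
  by (simp add: mv_iter_def funpow_Suc_right del: funpow.simps)

lemma inv_sub_mv_iter: "inv_sub Ops U \<Longrightarrow> A \<in> Ops \<Longrightarrow> v \<in> U \<Longrightarrow> mv_iter A j v \<in> U"
  by (induction j) (auto simp: inv_sub_def)

definition hw_span :: "'a::field^'n^'n \<Rightarrow> 'a^'n \<Rightarrow> nat \<Rightarrow> ('a^'n) set" where
  "hw_span F v lam = vec.span ((\<lambda>j. mv_iter F j v) ` {..lam})"

locale sl2 =
  fixes E H F :: "'a::field_char_0^'n::finite^'n"
  assumes HE: "\<And>v. H *v (E *v v) = E *v (H *v v) + 2 *s (E *v v)"
    and HF: "\<And>v. H *v (F *v v) = F *v (H *v v) - 2 *s (F *v v)"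
    and EF: "\<And>v. E *v (F *v v) = F *v (E *v v) + H *v v"
begin

context
  fixes v :: "'a^'n" and lam :: nat
  assumes E_v: "E *v v = 0" and H_v: "H *v v = of_nat lam *s v"
begin

lemma H_mv_iter: "H *v mv_iter F j v = (of_nat lam - 2 * of_nat j) *s mv_iter F j v"
proof (induction j)
  case 0
  then show ?case using H_v by simp
next
  case (Suc j)
  have "H *v mv_iter F (Suc j) v = F *v (H *v mv_iter F j v) - 2 *s (F *v mv_iter F j v)"
    by (simp add: HF)
  also have "\<dots> = (of_nat lam - 2 * of_nat j) *s (F *v mv_iter F j v) - 2 *s (F *v mv_iter F j v)"
    by (simp only: Suc vector_scalar_commute)
  also have "\<dots> = ((of_nat lam - 2 * of_nat j) - 2) *s (F *v mv_iter F j v)"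
    by (simp only: vec.scale_left_diff_distrib)
  also have "(of_nat lam - 2 * of_nat j) - 2 = (of_nat lam - 2 * of_nat (Suc j) :: 'a)"
    by simp
  finally show ?case
    by simp
qed

lemma E_mv_iter_Suc:
  "E *v mv_iter F (Suc j) v = (of_nat (Suc j) * (of_nat lam - of_nat j)) *s mv_iter F j v"
proof (induction j)
  case 0
  then show ?case using E_v H_v by (simp add: EF)
next
  case (Suc j)
  have "E *v mv_iter F (Suc (Suc j)) v = F *v (E *v mv_iter F (Suc j) v) + H *v mv_iter F (Suc j) v"
    by (simp add: EF)
  also have "\<dots> = (of_nat (Suc j) * (of_nat lam - of_nat j) + (of_nat lam - 2 * of_nat (Suc j)))
      *s mv_iter F (Suc j) v"
    by (simp only: Suc.IH H_mv_iter vector_scalar_commute vec.scale_left_distrib, simp only: mv_iter_Suc)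
  also have "of_nat (Suc j) * (of_nat lam - of_nat j) + (of_nat lam - 2 * of_nat (Suc j))
      = (of_nat (Suc (Suc j)) * (of_nat lam - of_nat (Suc j)) :: 'a)"
    by (simp add: algebra_simps)
  finally show ?case .
qed

lemma mv_iter_nonzero_card_bound:
  assumes "\<forall>j\<le>N. mv_iter F j v \<noteq> 0"
  shows "Suc N \<le> CARD('n)"
proof -
  have "card {..N} \<le> CARD('n)"
  proof (rule card_eigenvectors_le)
    show "inj_on (\<lambda>j. of_nat lam - 2 * of_nat j :: 'a) {..N}"
      by (auto simp: inj_on_def)
  qed (use assms H_mv_iter in auto)
  then show ?thesis
    by simp
qed

context
  assumes v_nz: "v \<noteq> 0"
begin

lemma mv_iter_Suc_hw_eq_0: "mv_iter F (Suc lam) v = 0"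
  and mv_iter_nonzero: "j \<le> lam \<Longrightarrow> mv_iter F j v \<noteq> 0"
proof -
  have "\<exists>p. mv_iter F p v = 0"
  proof (rule ccontr)
    assume "\<nexists>p. mv_iter F p v = 0"
    then have "Suc CARD('n) \<le> CARD('n)"
      using mv_iter_nonzero_card_bound by blast
    then show False
      by simp
  qed
  then obtain p where p: "mv_iter F p v = 0" and p_min: "\<And>q. q < p \<Longrightarrow> mv_iter F q v \<noteq> 0"
    using exists_least_iff[of "\<lambda>p. mv_iter F p v = 0"] by blast
  obtain q where q: "p = Suc q"
    using p v_nz by (cases p) auto
  \<comment> \<open>\<open>E\<close> maps the vanishing \<open>F\<^sup>q\<^sup>+\<^sup>1 v\<close> to \<open>(q+1)(lam-q) F\<^sup>q v\<close> with \<open>F\<^sup>q v \<noteq> 0\<close>, forcing \<open>q = lam\<close>\<close>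
  have "(of_nat (Suc q) * (of_nat lam - of_nat q) :: 'a) *s mv_iter F q v = 0"
    using E_mv_iter_Suc[of q] p q by simp
  then have "lam = q"
    using p_min[of q] q by (simp del: of_nat_Suc)
  then show "mv_iter F (Suc lam) v = 0" "j \<le> lam \<Longrightarrow> mv_iter F j v \<noteq> 0"
    using p p_min q by auto
qed

lemma mv_iter_coeffs_eq_0:
  assumes "(\<Sum>j\<le>lam. \<alpha> j *s mv_iter F j v) = 0" "j \<le> lam"
  shows "\<alpha> j = 0"
proof -
  have eigen: "H *v (\<alpha> i *s mv_iter F i v) = (of_nat lam - 2 * of_nat i) *s (\<alpha> i *s mv_iter F i v)"
    for i
    by (simp only: vector_scalar_commute H_mv_iter vector_smult_assoc mult.commute)
  have "\<forall>i\<in>{..lam}. \<alpha> i *s mv_iter F i v = 0"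
    by (rule eigenvectors_sum_eq_0[where H = H and c = "\<lambda>i. of_nat lam - 2 * of_nat i"])
      (use eigen assms(1) in \<open>auto simp: inj_on_def\<close>)
  then have "\<alpha> j *s mv_iter F j v = 0"
    using assms(2) by simp
  then show ?thesis
    using mv_iter_nonzero[OF assms(2)] by simp
qed

lemma hw_span_explicit: "x \<in> hw_span F v lam \<Longrightarrow> \<exists>\<alpha>. x = (\<Sum>j\<le>lam. \<alpha> j *s mv_iter F j v)"
  unfolding hw_span_def by (rule span_image_explicit) auto

lemma mv_iter_in_hw_span: "j \<le> lam \<Longrightarrow> mv_iter F j v \<in> hw_span F v lam"
  unfolding hw_span_def by (rule vec.span_base) auto

lemma E_mv_iter_nonzero: "1 \<le> j \<Longrightarrow> j \<le> lam \<Longrightarrow> E *v mv_iter F j v \<noteq> 0"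
  using E_mv_iter_Suc[of "j - 1"] mv_iter_nonzero[of "j - 1"] by (cases j) (auto simp del: of_nat_Suc)

lemma subspace_hw_span: "vec.subspace (hw_span F v lam)"
  by (simp add: hw_span_def)

lemma inv_sub_hw_span: "inv_sub {E, H, F} (hw_span F v lam)"
  unfolding inv_sub_def
proof (intro conjI ballI)
  show "vec.subspace (hw_span F v lam)"
    by (rule subspace_hw_span)
  fix A x assume A: "A \<in> {E, H, F}" and x: "x \<in> hw_span F v lam"
  have "E *v mv_iter F j v \<in> hw_span F v lam" if "j \<le> lam" for j
  proof (cases j)
    case (Suc i)
    then show ?thesis
      using that unfolding Suc E_mv_iter_Suc
      by (intro vec.subspace_scale subspace_hw_span mv_iter_in_hw_span) simp
  qed (simp add: E_v vec.subspace_0[OF subspace_hw_span])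
  moreover have "H *v mv_iter F j v \<in> hw_span F v lam" if "j \<le> lam" for j
    unfolding H_mv_iter by (intro vec.subspace_scale subspace_hw_span mv_iter_in_hw_span that)
  moreover have "F *v mv_iter F j v \<in> hw_span F v lam" if "j \<le> lam" for j
  proof (cases "j = lam")
    case True
    then show ?thesis
      using mv_iter_Suc_hw_eq_0 by (simp add: vec.subspace_0[OF subspace_hw_span])
  next
    case False
    then show ?thesis
      using mv_iter_in_hw_span[of "Suc j"] that by simp
  qed
  ultimately have "A *v g \<in> hw_span F v lam" if "g \<in> (\<lambda>j. mv_iter F j v) ` {..lam}" for g
    using A that by blast
  then show "A *v x \<in> hw_span F v lam"
    using x unfolding hw_span_def by (rule mv_in_span)
qed

lemma hw_span_E_kernel:
  assumes x: "x \<in> hw_span F v lam" and "E *v x = 0"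
  shows "\<exists>c. x = c *s v"
proof -
  obtain \<alpha> where \<alpha>: "x = (\<Sum>j\<le>lam. \<alpha> j *s mv_iter F j v)"
    using hw_span_explicit[OF x] by blast
  \<comment> \<open>the vectors \<open>E F\<^sup>j v\<close> are eigenvectors of \<open>H\<close> for the distinct eigenvalues \<open>lam - 2j + 2\<close>\<close>
  have "(\<Sum>j\<le>lam. \<alpha> j *s (E *v mv_iter F j v)) = 0"
    using assms(2) unfolding \<alpha> by (simp only: vec.sum vector_scalar_commute)
  moreover have "H *v (\<alpha> j *s (E *v mv_iter F j v))
      = (of_nat lam - 2 * of_nat j + 2) *s (\<alpha> j *s (E *v mv_iter F j v))" if "j \<in> {..lam}" for j
  proof -
    have "H *v (E *v mv_iter F j v) = (of_nat lam - 2 * of_nat j + 2) *s (E *v mv_iter F j v)"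
      by (simp only: HE H_mv_iter vector_scalar_commute vec.scale_left_distrib)
    then show ?thesis
      by (simp only: vector_scalar_commute vector_smult_assoc mult.commute)
  qed
  moreover have "inj_on (\<lambda>j. of_nat lam - 2 * of_nat j + 2 :: 'a) {..lam}"
    by (auto simp: inj_on_def)
  ultimately have "\<forall>j\<in>{..lam}. \<alpha> j *s (E *v mv_iter F j v) = 0"
    by (intro eigenvectors_sum_eq_0[where H = H]) auto
  then have "\<alpha> j *s mv_iter F j v = 0" if "j \<in> {..lam} - {0}" for j
    using E_mv_iter_nonzero[of j] that by auto
  then have "x = \<alpha> 0 *s v"
    unfolding \<alpha> by (subst sum.mono_neutral_right[of "{..lam}" "{0}"]) auto
  then show ?thesis
    by blast
qed

lemma E_nilpotent_on_span: "x \<in> vec.span ((\<lambda>j. mv_iter F j v) ` {..<k}) \<Longrightarrow> mv_iter E k x = 0"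
proof (induction k arbitrary: x)
  case 0
  then show ?case by simp
next
  case (Suc k)
  have "E *v x \<in> vec.span ((\<lambda>j. mv_iter F j v) ` {..<k})"
  proof (rule mv_in_span[OF _ Suc.prems])
    fix g assume "g \<in> (\<lambda>j. mv_iter F j v) ` {..<Suc k}"
    then obtain j where j: "j < Suc k" "g = mv_iter F j v"
      by blast
    then show "E *v g \<in> vec.span ((\<lambda>j. mv_iter F j v) ` {..<k})"
      using E_v E_mv_iter_Suc
      by (cases j) (auto simp del: mv_iter_Suc intro: vec.span_zero vec.span_scale vec.span_base)
  qed
  then show ?case
    using Suc.IH by (simp only: mv_iter_Suc_right)
qed

lemma irred_hw_span: "irred_hw E H F lam (hw_span F v lam)"
  unfolding irred_hw_def irred_sl2_def
proof (intro conjI)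
  have v_in: "v \<in> hw_span F v lam"
    using mv_iter_in_hw_span[of 0] by simp
  show "inv_sub {E, H, F} (hw_span F v lam)"
    by (rule inv_sub_hw_span)
  show "hw_span F v lam \<noteq> {0}" "\<exists>w\<in>hw_span F v lam. hw_vec E H lam w"
    using v_in v_nz E_v H_v by (auto simp: hw_vec_def)
  show "\<forall>U. inv_sub {E, H, F} U \<and> U \<subseteq> hw_span F v lam \<longrightarrow> U = {0} \<or> U = hw_span F v lam"
  proof (intro allI impI)
    fix U assume U: "inv_sub {E, H, F} U \<and> U \<subseteq> hw_span F v lam"
    then have sub: "vec.subspace U"
      by (simp add: inv_sub_def)
    show "U = {0} \<or> U = hw_span F v lam"
    proof (cases "U = {0}")
      case False
      then obtain w where w: "w \<in> U" "w \<noteq> 0"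
        using vec.subspace_0[OF sub] by blast
      \<comment> \<open>\<open>E\<close> is nilpotent on the string, so some \<open>E\<^sup>q w\<close> is a nonzero highest weight vector in \<open>U\<close>\<close>
      have "mv_iter E (Suc lam) w = 0"
        using E_nilpotent_on_span[of w "Suc lam"] w U
        unfolding hw_span_def lessThan_Suc_atMost by auto
      then obtain p where p: "mv_iter E p w = 0" and p_min: "\<And>q. q < p \<Longrightarrow> mv_iter E q w \<noteq> 0"
        using exists_least_iff[of "\<lambda>p. mv_iter E p w = 0"] by blast
      obtain q where q: "p = Suc q"
        using p w by (cases p) auto
      let ?y = "mv_iter E q w"
      have "?y \<in> U" "?y \<in> hw_span F v lam"
        using inv_sub_mv_iter[of _ _ E] U w inv_sub_hw_span by auto
      moreover obtain c where c: "?y = c *s v"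
        using hw_span_E_kernel \<open>?y \<in> hw_span F v lam\<close> p q by auto
      moreover have "c \<noteq> 0"
        using p_min q c by auto
      ultimately have "v \<in> U"
        using vec.subspace_scale[OF sub, of ?y "inverse c"] by simp
      then have "hw_span F v lam \<subseteq> U"
        unfolding hw_span_def
        using inv_sub_mv_iter[of _ U F v] U sub by (intro vec.span_minimal) auto
      with U show ?thesis
        by auto
    qed simp
  qed
qed

lemma hw_span_weight_vector:
  assumes x: "x \<in> hw_span F v lam" and Hx: "H *v x = \<nu> *s x"
  shows "\<exists>k \<alpha>. x = \<alpha> *s mv_iter F k v"
proof -
  obtain \<alpha> where \<alpha>: "x = (\<Sum>j\<le>lam. \<alpha> j *s mv_iter F j v)"
    using hw_span_explicit[OF x] by blast
  let ?c = "\<lambda>j. of_nat lam - 2 * of_nat j :: 'a"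
  have "0 = H *v x - \<nu> *s x"
    using Hx by simp
  also have "\<dots> = (\<Sum>j\<le>lam. ((?c j - \<nu>) * \<alpha> j) *s mv_iter F j v)"
    unfolding \<alpha> vec.sum vector_scalar_commute H_mv_iter vec.scale_sum_right sum_subtractf[symmetric]
    by (rule sum.cong) (simp_all add: vec.scale_left_diff_distrib algebra_simps)
  finally have "(\<Sum>j\<le>lam. ((?c j - \<nu>) * \<alpha> j) *s mv_iter F j v) = 0" ..
  from mv_iter_coeffs_eq_0[OF this]
  have coeff: "(?c j - \<nu>) * \<alpha> j = 0" if "j \<le> lam" for j
    using that .
  show ?thesis
  proof (cases "\<exists>k\<le>lam. ?c k = \<nu>")
    case True
    then obtain k where k: "k \<le> lam" "?c k = \<nu>"
      by blast
    have "\<alpha> j *s mv_iter F j v = 0" if "j \<in> {..lam} - {k}" for j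
    proof -
      have "?c j \<noteq> \<nu>"
        using k(2)[symmetric] that by simp
      then show ?thesis
        using coeff[of j] that by simp
    qed
    then have "x = \<alpha> k *s mv_iter F k v"
      unfolding \<alpha> by (subst sum.mono_neutral_right[of "{..lam}" "{k}"]) (use k(1) in simp_all)
    then show ?thesis
      by blast
  next
    case False
    then have "\<alpha> j = 0" if "j \<le> lam" for j
      using coeff[OF that] that by auto
    then have "x = 0 *s mv_iter F 0 v"
      unfolding \<alpha> by simp
    then show ?thesis
      by blast
  qed
qed

lemma hw_span_weight_vectors_proportional:
  assumes x: "x \<in> hw_span F v lam" "H *v x = \<nu> *s x" "x \<noteq> 0"
    and y: "y \<in> hw_span F v lam" "H *v y = \<nu> *s y"
  shows "\<exists>c. y = c *s x"
proof -
  have weight: "\<nu> = of_nat lam - 2 * of_nat k" if "z = \<alpha> *s mv_iter F k v" "H *v z = \<nu> *s z" "z \<noteq> 0"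
    for z \<alpha> k
  proof -
    have "H *v z = (of_nat lam - 2 * of_nat k) *s z"
      unfolding that(1) by (simp only: vector_scalar_commute H_mv_iter vector_smult_assoc mult.commute)
    then have "(of_nat lam - 2 * of_nat k) *s z = \<nu> *s z"
      using that(2) by (rule trans[OF sym])
    then show ?thesis
      using that(3) by (simp only: vector_mul_rcancel) auto
  qed
  obtain k \<alpha> where k: "x = \<alpha> *s mv_iter F k v"
    using hw_span_weight_vector x(1,2) by blast
  obtain k' \<beta> where k': "y = \<beta> *s mv_iter F k' v"
    using hw_span_weight_vector y by blast
  show ?thesis
  proof (cases "y = 0")
    case False
    then have "k' = k"
      using weight[OF k x(2,3)] weight[OF k' y(2)] by simp
    moreover have "\<alpha> \<noteq> 0"
      using k x(3) by auto
    ultimately have "y = (\<beta> / \<alpha>) *s x"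
      using k k' by simp
    then show ?thesis
      by blast
  qed (intro exI[of _ 0], simp)
qed

end
end

lemma irred_hw_obtain_hw_span:
  assumes "irred_hw E H F a A"
  obtains u where "E *v u = 0" "H *v u = of_nat a *s u" "u \<noteq> 0" "u \<in> A" "A = hw_span F u a"
proof -
  from assms obtain u where u: "u \<in> A" "E *v u = 0" "H *v u = of_nat a *s u" "u \<noteq> 0"
    by (auto simp: irred_hw_def hw_vec_def)
  have inv: "inv_sub {E, H, F} A" and irr: "\<forall>U. inv_sub {E, H, F} U \<and> U \<subseteq> A \<longrightarrow> U = {0} \<or> U = A"
    using assms by (auto simp: irred_hw_def irred_sl2_def)
  have "hw_span F u a \<subseteq> A"
    unfolding hw_span_def
    using inv_sub_mv_iter[OF inv, of F u] u(1) inv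
    by (intro vec.span_minimal) (auto simp: inv_sub_def)
  moreover have "hw_span F u a \<noteq> {0}"
    using mv_iter_in_hw_span[OF u(2-4), of 0] u(4) by auto
  ultimately have "A = hw_span F u a"
    using irr inv_sub_hw_span[OF u(2-4)] by blast
  with u that show ?thesis
    by blast
qed

end

section \<open>Tensor products\<close>

(* lmat L and rmat R act on 'a^('i \<times> 'j) as L \<otimes> 1 and 1 \<otimes> R; tcol q T and trow p T are the
   slices of T with second, resp. first, index fixed. *)
definition lmat :: "'a::comm_ring_1^'i^'i \<Rightarrow> 'a^('i::finite \<times> 'j::finite)^('i \<times> 'j)" where
  "lmat L = (\<chi> p q. if snd p = snd q then L $ fst p $ fst q else 0)"

definition rmat :: "'a::comm_ring_1^'j^'j \<Rightarrow> 'a^('i::finite \<times> 'j::finite)^('i \<times> 'j)" where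
  "rmat R = (\<chi> p q. if fst p = fst q then R $ snd p $ snd q else 0)"

definition tcol :: "'j \<Rightarrow> 'a^('i::finite \<times> 'j::finite) \<Rightarrow> 'a^'i" where
  "tcol q T = (\<chi> p. T $ (p, q))"

definition trow :: "'i \<Rightarrow> 'a^('i::finite \<times> 'j::finite) \<Rightarrow> 'a^'j" where
  "trow p T = (\<chi> q. T $ (p, q))"

lemma tmat_eq_lmat_plus_rmat: "tmat A B = lmat A + rmat B"
  by (simp add: tmat_def lmat_def rmat_def vec_eq_iff)

lemma tmat_mv: "tmat A B *v T = lmat A *v T + rmat B *v T"
  by (simp add: tmat_eq_lmat_plus_rmat matrix_vector_mult_add_rdistrib)

lemma sum_UNIV_prod:
  "(\<Sum>x\<in>(UNIV::('i::finite \<times> 'j::finite) set). h x) = (\<Sum>r\<in>UNIV. \<Sum>s\<in>UNIV. h (r, s))"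
  by (simp add: sum.cartesian_product UNIV_Times_UNIV[symmetric] case_prod_unfold
      del: UNIV_Times_UNIV)

lemma sum_UNIV_prod_swap:
  "(\<Sum>x\<in>(UNIV::('i::finite \<times> 'j::finite) set). h x) = (\<Sum>s\<in>UNIV. \<Sum>r\<in>UNIV. h (r, s))"
  by (simp add: sum_UNIV_prod sum.swap[of _ "UNIV::'i set"])

lemma lmat_mv_component: "(lmat L *v T) $ x = (\<Sum>r\<in>UNIV. L $ fst x $ r * T $ (r, snd x))"
  by (simp add: lmat_def matrix_vector_mult_def sum_UNIV_prod if_distrib[of "\<lambda>x. x * _"]
      sum.If_cases)

lemma rmat_mv_component: "(rmat R *v T) $ x = (\<Sum>s\<in>UNIV. R $ snd x $ s * T $ (fst x, s))"
  by (simp add: rmat_def matrix_vector_mult_def sum_UNIV_prod_swap if_distrib[of "\<lambda>x. x * _"]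
      sum.If_cases)

lemma tcol_eq_iff: "(\<forall>q. tcol q T = tcol q S) \<longleftrightarrow> T = S"
  and trow_eq_iff: "(\<forall>p. trow p T = trow p S) \<longleftrightarrow> T = S"
  by (auto simp: tcol_def trow_def vec_eq_iff)

lemma tcol_lmat: "tcol q (lmat L *v T) = L *v tcol q T"
  and trow_rmat: "trow p (rmat R *v T) = R *v trow p T"
  by (simp_all add: tcol_def trow_def lmat_mv_component rmat_mv_component vec_eq_iff)
    (simp_all add: matrix_vector_mult_def)

lemma tcol_add: "tcol q (T + S) = tcol q T + tcol q S"
  and tcol_scale: "tcol q (c *s T) = c *s tcol q T"
  and trow_add: "trow p (T + S) = trow p T + trow p S"
  and trow_scale: "trow p (c *s T) = c *s trow p T"
  and tcol_0 [simp]: "tcol q 0 = 0"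
  and trow_0 [simp]: "trow p 0 = 0"
  by (simp_all add: tcol_def trow_def vec_eq_iff)

lemma lmat_lmat_mv: "lmat A *v (lmat B *v T) = lmat (A ** B) *v (T::'a::field^('i::finite \<times> 'j::finite))"
  by (simp add: tcol_eq_iff[symmetric] tcol_lmat matrix_vector_mul_assoc[symmetric])

lemma rmat_rmat_mv: "rmat A *v (rmat B *v T) = rmat (A ** B) *v (T::'a::field^('i::finite \<times> 'j::finite))"
  by (simp add: trow_eq_iff[symmetric] trow_rmat matrix_vector_mul_assoc[symmetric])

lemma lmat_rmat_mv_commute: "lmat A *v (rmat B *v T) = rmat B *v (lmat A *v T)"
proof -
  have "(lmat A *v (rmat B *v T)) $ x = (rmat B *v (lmat A *v T)) $ x" for x
    by (simp add: lmat_mv_component rmat_mv_component sum_distrib_left mult.left_commute)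
      (rule sum.swap)
  then show ?thesis
    by (simp add: vec_eq_iff)
qed

lemma lmat_tvec: "lmat L *v tvec u w = tvec (L *v u) w"
  and rmat_tvec: "rmat R *v tvec u w = tvec u (R *v w)"
  by (simp_all add: vec_eq_iff lmat_mv_component rmat_mv_component)
    (simp_all add: tvec_def matrix_vector_mult_def sum_distrib_left sum_distrib_right mult_ac)

lemma tmat_tmat_mv:
  "tmat A B *v (tmat C D *v T) = lmat (A ** C) *v T + rmat (B ** D) *v T
     + rmat D *v (lmat A *v T) + rmat B *v (lmat C *v (T::'a::field^('i::finite \<times> 'j::finite)))"
  by (simp add: tmat_mv vec.add lmat_lmat_mv rmat_rmat_mv lmat_rmat_mv_commute)

lemma lmat_mv_eqI:
  assumes "\<And>v. A *v v = B *v v + c *s (C *v v)"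
  shows "lmat A *v T = lmat B *v T + c *s (lmat C *v (T::'a::field^('i::finite \<times> 'j::finite)))"
  using assms by (simp add: tcol_eq_iff[symmetric] tcol_lmat tcol_add tcol_scale)

lemma rmat_mv_eqI:
  assumes "\<And>v. A *v v = B *v v + c *s (C *v v)"
  shows "rmat A *v T = rmat B *v T + c *s (rmat C *v (T::'a::field^('i::finite \<times> 'j::finite)))"
  using assms by (simp add: trow_eq_iff[symmetric] trow_rmat trow_add trow_scale)

lemma sl2_tensor:
  assumes "sl2 E H F" "sl2 E' H' F'"
  shows "sl2 (tmat E E') (tmat H H') (tmat F (F' :: 'a::field_char_0^'j::finite^'j))"
proof -
  interpret V: sl2 E H F by fact
  interpret W: sl2 E' H' F' by fact
  have HE: "lmat (H ** E) *v T = lmat (E ** H) *v T + 2 *s (lmat E *v T)"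
    "rmat (H' ** E') *v T = rmat (E' ** H') *v T + 2 *s (rmat E' *v T)"
    and HF: "lmat (H ** F) *v T = lmat (F ** H) *v T + (- 2) *s (lmat F *v T)"
    "rmat (H' ** F') *v T = rmat (F' ** H') *v T + (- 2) *s (rmat F' *v T)"
    and EF: "lmat (E ** F) *v T = lmat (F ** E) *v T + 1 *s (lmat H *v T)"
    "rmat (E' ** F') *v T = rmat (F' ** E') *v T + 1 *s (rmat H' *v T)"
    for T :: "'a^('b \<times> 'j)"
    by (intro lmat_mv_eqI rmat_mv_eqI;
        simp add: matrix_vector_mul_assoc[symmetric] V.HE W.HE V.HF W.HF V.EF W.EF)+
  show ?thesis
  proof
    fix T :: "'a^('b \<times> 'j)"
    show "tmat H H' *v (tmat E E' *v T) = tmat E E' *v (tmat H H' *v T) + 2 *s (tmat E E' *v T)"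
      by (simp only: tmat_tmat_mv HE) (simp add: tmat_mv vec.add vec.scale lmat_rmat_mv_commute
          algebra_simps)
    show "tmat H H' *v (tmat F F' *v T) = tmat F F' *v (tmat H H' *v T) - 2 *s (tmat F F' *v T)"
      by (simp only: tmat_tmat_mv HF) (simp add: tmat_mv vec.add vec.scale lmat_rmat_mv_commute
          algebra_simps)
    show "tmat E E' *v (tmat F F' *v T) = tmat F F' *v (tmat E E' *v T) + tmat H H' *v T"
      by (simp only: tmat_tmat_mv EF) (simp add: tmat_mv vec.add vec.scale lmat_rmat_mv_commute
          algebra_simps)
  qed
qed

lemma tvec_add_left: "tvec (u + u') w = tvec u w + tvec u' w"
  and tvec_add_right: "tvec u (w + w') = tvec u w + tvec u w'"
  and tvec_diff_right: "tvec u (w - w') = tvec u w - tvec u w'"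
  and tvec_scale_left: "tvec (c *s u) w = c *s tvec u w"
  and tvec_scale_right: "tvec u (c *s w) = c *s tvec u w"
  and tvec_0_left [simp]: "tvec 0 w = 0"
  and tvec_0_right [simp]: "tvec u 0 = 0"
  for u :: "'a::comm_ring_1^'i" and w :: "'a^'j"
  by (simp_all add: tvec_def vec_eq_iff algebra_simps)

lemma tvec_sum_left: "tvec (\<Sum>i\<in>I. f i) w = (\<Sum>i\<in>I. tvec (f i) (w::'a::comm_ring_1^'j))"
  by (induction I rule: infinite_finite_induct) (auto simp: tvec_add_left)

lemma tcol_tvec: "tcol q (tvec u w) = w $ q *s (u::'a::comm_ring_1^'i::finite)"
  by (simp add: tcol_def tvec_def vec_eq_iff mult.commute)

lemma tcol_sum: "tcol q (\<Sum>i\<in>I. f i) = (\<Sum>i\<in>I. tcol q (f i))"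
  by (simp add: tcol_def vec_eq_iff sum_component)

lemma tmat_tvec: "tmat X Y *v tvec u w = tvec (X *v u) w + tvec u (Y *v (w::'a::field^'j::finite))"
  by (simp add: tmat_mv lmat_tvec rmat_tvec)

lemma tvec_in_tsub: "u \<in> A \<Longrightarrow> w \<in> B \<Longrightarrow> tvec u w \<in> tsub A B"
  unfolding tsub_def by (rule vec.span_base) blast

lemma tvec_axis: "tvec (axis i 1) (axis j 1) = (axis (i, j) 1 :: 'a::comm_ring_1^('i::finite \<times> 'j::finite))"
  by (simp add: tvec_def axis_def vec_eq_iff)

lemma tvec_basis_expansion:
  "T = (\<Sum>x\<in>UNIV. T $ x *s tvec (axis (fst x) 1) (axis (snd x) (1::'a::field)))"
  by (simp add: tvec_axis basis_expansion)

lemma lmat_rmat_in_tsub: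
  assumes "\<And>x. P *v x \<in> A" "\<And>y. Q *v y \<in> B"
  shows "lmat P *v (rmat Q *v T) \<in> tsub A (B::('a::field^'j::finite) set)"
proof -
  have "lmat P *v (rmat Q *v T)
      = (\<Sum>x\<in>UNIV. T $ x *s tvec (P *v axis (fst x) 1) (Q *v axis (snd x) 1))"
    by (subst tvec_basis_expansion[of T]) (simp add: vec.sum vec.scale lmat_tvec rmat_tvec)
  also have "\<dots> \<in> tsub A B"
    unfolding tsub_def by (intro vec.span_sum vec.span_scale vec.span_base) (auto intro: assms)
  finally show ?thesis .
qed

lemma tmat_in_tsub:
  assumes "\<And>u. u \<in> A \<Longrightarrow> X *v u \<in> A" "\<And>w. w \<in> B \<Longrightarrow> Y *v w \<in> B" "T \<in> tsub A B"
  shows "tmat X Y *v T \<in> tsub A (B::('a::field^'j::finite) set)"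
  using assms(3) unfolding tsub_def
proof (rule mv_in_span[rotated])
  fix g assume "g \<in> {tvec u w |u w. u \<in> A \<and> w \<in> B}"
  then obtain u w where "g = tvec u w" "u \<in> A" "w \<in> B"
    by blast
  then show "tmat X Y *v g \<in> vec.span {tvec u w |u w. u \<in> A \<and> w \<in> B}"
    using assms(1,2) by (auto simp: tmat_tvec intro!: vec.span_add tvec_in_tsub[unfolded tsub_def])
qed

locale sl2_pair = V: sl2 E H F + W: sl2 E' H' F'
  for E H F :: "'a::field_char_0^'i::finite^'i" and E' H' F' :: "'a^'j::finite^'j"
begin

context
  fixes u :: "'a^'i" and a :: nat
  assumes E_u: "E *v u = 0" and H_u: "H *v u = of_nat a *s u" and u_nz: "u \<noteq> 0"
begin

lemma tvec_mv_iter_sum_eq_0: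
  assumes "(\<Sum>j\<le>a. tvec (mv_iter F j u) (z j)) = (0::'a^('i \<times> 'j))" "j \<le> a"
  shows "z j = 0"
proof -
  have "z j $ q = 0" for q
  proof (rule V.mv_iter_coeffs_eq_0[OF E_u H_u u_nz _ assms(2)])
    have "(\<Sum>j\<le>a. z j $ q *s mv_iter F j u) = tcol q (\<Sum>j\<le>a. tvec (mv_iter F j u) (z j))"
      by (simp add: tcol_sum tcol_tvec)
    then show "(\<Sum>j\<le>a. z j $ q *s mv_iter F j u) = 0"
      using assms(1) by (simp add: tcol_def vec_eq_iff)
  qed
  then show ?thesis
    by (simp add: vec_eq_iff)
qed

lemma tsub_hw_span_explicit:
  assumes T: "T \<in> tsub (hw_span F u a) B" and B: "vec.subspace B"
  shows "\<exists>w. (\<forall>j. w j \<in> B) \<and> T = (\<Sum>j\<le>a. tvec (mv_iter F j u) (w j))"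
  using T unfolding tsub_def
proof (induction rule: vec.span_induct_alt)
  case base
  show ?case
    using B by (intro exI[of _ "\<lambda>_. 0"]) (simp add: vec.subspace_0)
next
  case (step c g y)
  then obtain w where w: "\<forall>j. w j \<in> B" "y = (\<Sum>j\<le>a. tvec (mv_iter F j u) (w j))"
    by blast
  from step obtain x y' where g: "g = tvec x y'" "x \<in> hw_span F u a" "y' \<in> B"
    by blast
  obtain \<alpha> where \<alpha>: "x = (\<Sum>j\<le>a. \<alpha> j *s mv_iter F j u)"
    using V.hw_span_explicit[OF E_u H_u u_nz g(2)] by blast
  have "c *s g + y = (\<Sum>j\<le>a. tvec (mv_iter F j u) (c *s (\<alpha> j *s y') + w j))"
    unfolding g(1) \<alpha> w(2)
    by (simp add: tvec_sum_left tvec_scale_left tvec_add_right tvec_scale_right vec.scale_sum_right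
        sum.distrib)
  moreover have "\<forall>j. c *s (\<alpha> j *s y') + w j \<in> B"
    using B g(3) w(1) by (simp add: vec.subspace_add vec.subspace_scale)
  ultimately show ?case
    by (intro exI[of _ "\<lambda>j. c *s (\<alpha> j *s y') + w j"]) simp
qed

lemma tmat_E_mv_iter_sum:
  "tmat E E' *v (\<Sum>j\<le>a. tvec (mv_iter F j u) (w j))
     = (\<Sum>j\<le>a. tvec (mv_iter F j u) (E' *v w j + (of_nat (Suc j) * (of_nat a - of_nat j)) *s w (Suc j)))"
proof -
  let ?c = "\<lambda>j. (of_nat (Suc j) * (of_nat a - of_nat j) :: 'a)"
  have "(\<Sum>j\<le>a. tvec (E *v mv_iter F j u) (w j))
      = tvec (E *v mv_iter F 0 u) (w 0) + (\<Sum>j<a. tvec (E *v mv_iter F (Suc j) u) (w (Suc j)))"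
    unfolding lessThan_Suc_atMost[symmetric] by (rule sum.lessThan_Suc_shift)
  also have "\<dots> = (\<Sum>j<a. tvec (mv_iter F j u) (?c j *s w (Suc j)))"
    using E_u by (simp add: V.E_mv_iter_Suc[OF E_u H_u] tvec_scale_left tvec_scale_right del: mv_iter_Suc)
  \<comment> \<open>the coefficient \<open>?c a\<close> vanishes, so the sum may run up to \<open>a\<close>\<close>
  also have "\<dots> = (\<Sum>j\<le>a. tvec (mv_iter F j u) (?c j *s w (Suc j)))"
    by (simp add: lessThan_Suc_atMost[symmetric])
  finally show ?thesis
    by (simp add: vec.sum tmat_tvec sum.distrib tvec_add_right add.commute)
qed

lemma tmat_H_mv_iter_sum:
  "tmat H H' *v (\<Sum>j\<le>a. tvec (mv_iter F j u) (w j))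
     = (\<Sum>j\<le>a. tvec (mv_iter F j u) ((of_nat a - 2 * of_nat j) *s w j + H' *v w j))"
  by (simp only: vec.sum tmat_tvec V.H_mv_iter[OF E_u H_u] tvec_scale_left tvec_scale_right tvec_add_right)

lemma E_kernel_coeffs_eq_0:
  assumes "tmat E E' *v (\<Sum>j\<le>a. tvec (mv_iter F j u) (w j)) = 0" and "w 0 = 0"
  shows "\<forall>j\<le>a. w j = 0"
proof (intro allI impI)
  fix j assume "j \<le> a"
  then show "w j = 0"
  proof (induction j)
    case 0
    then show ?case using assms(2) by simp
  next
    case (Suc j)
    have "E' *v w j + (of_nat (Suc j) * (of_nat a - of_nat j)) *s w (Suc j) = 0"
      using tvec_mv_iter_sum_eq_0[OF assms(1)[unfolded tmat_E_mv_iter_sum], of j] Suc.prems by simp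
    moreover have "(of_nat (Suc j) * (of_nat a - of_nat j) :: 'a) \<noteq> 0"
      using Suc.prems by (simp del: of_nat_Suc)
    ultimately show ?case
      using Suc by simp
  qed
qed

lemma weight_vector_first_coeff:
  assumes "tmat H H' *v (\<Sum>j\<le>a. tvec (mv_iter F j u) (w j)) = \<mu> *s (\<Sum>j\<le>a. tvec (mv_iter F j u) (w j))"
  shows "H' *v w 0 = (\<mu> - of_nat a) *s w 0"
proof -
  have "(\<Sum>j\<le>a. tvec (mv_iter F j u) (((of_nat a - 2 * of_nat j) *s w j + H' *v w j) - \<mu> *s w j)) = 0"
    using assms unfolding tmat_H_mv_iter_sum
    by (simp add: tvec_diff_right sum_subtractf vec.scale_sum_right tvec_scale_right)
  then have "((of_nat a - 2 * of_nat 0) *s w 0 + H' *v w 0) - \<mu> *s w 0 = 0"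
    by (rule tvec_mv_iter_sum_eq_0) simp
  then show ?thesis
    by (simp add: vec.scale_left_diff_distrib algebra_simps)
qed

end

lemma hw_vectors_tensor_proportional:
  assumes A: "irred_hw E H F a A" and B: "irred_hw E' H' F' b B"
    and T1: "T1 \<in> tsub A B" "tmat E E' *v T1 = 0" "tmat H H' *v T1 = \<mu> *s T1" "T1 \<noteq> 0"
    and T2: "T2 \<in> tsub A B" "tmat E E' *v T2 = 0" "tmat H H' *v T2 = \<mu> *s T2"
  shows "\<exists>c. T2 = c *s T1"
proof -
  obtain u where u: "E *v u = 0" "H *v u = of_nat a *s u" "u \<noteq> 0" "A = hw_span F u a"
    using V.irred_hw_obtain_hw_span[OF A] by blast
  obtain u' where u': "E' *v u' = 0" "H' *v u' = of_nat b *s u'" "u' \<noteq> 0" "B = hw_span F' u' b"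
    using W.irred_hw_obtain_hw_span[OF B] by blast
  have B_sub: "vec.subspace B"
    using u'(4) by (simp add: hw_span_def)
  obtain w1 where w1: "\<forall>j. w1 j \<in> B" "T1 = (\<Sum>j\<le>a. tvec (mv_iter F j u) (w1 j))"
    using tsub_hw_span_explicit[OF u(1-3) _ B_sub] T1(1) u(4) by blast
  obtain w2 where w2: "\<forall>j. w2 j \<in> B" "T2 = (\<Sum>j\<le>a. tvec (mv_iter F j u) (w2 j))"
    using tsub_hw_span_explicit[OF u(1-3) _ B_sub] T2(1) u(4) by blast
  \<comment> \<open>the first coefficients are weight vectors of the same weight in \<open>B\<close>, hence proportional\<close>
  have "w1 0 \<noteq> 0"
  proof
    assume "w1 0 = 0"
    then have "\<forall>j\<le>a. w1 j = 0"
      using E_kernel_coeffs_eq_0[OF u(1-3)] T1(2) w1(2) by blast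
    with T1(4) show False
      unfolding w1(2) by simp
  qed
  moreover have "H' *v w1 0 = (\<mu> - of_nat a) *s w1 0" "H' *v w2 0 = (\<mu> - of_nat a) *s w2 0"
    using weight_vector_first_coeff[OF u(1-3)] T1(3) T2(3) w1(2) w2(2) by blast+
  ultimately obtain c where c: "w2 0 = c *s w1 0"
    using W.hw_span_weight_vectors_proportional[OF u'(1-3)] w1(1) w2(1) u'(4) by blast
  have D: "T2 - c *s T1 = (\<Sum>j\<le>a. tvec (mv_iter F j u) (w2 j - c *s w1 j))"
    unfolding w1(2) w2(2) by (simp add: tvec_diff_right tvec_scale_right sum_subtractf vec.scale_sum_right)
  have "tmat E E' *v (T2 - c *s T1) = 0"
    using T1(2) T2(2) by (simp add: vec.diff vector_scalar_commute)
  then have "\<forall>j\<le>a. w2 j - c *s w1 j = 0"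
    using E_kernel_coeffs_eq_0[OF u(1-3), of "\<lambda>j. w2 j - c *s w1 j"] c unfolding D by simp
  then have "T2 - c *s T1 = 0"
    unfolding D by simp
  then show ?thesis
    by (intro exI[of _ c]) simp
qed

end

section \<open>Direct sum projections\<close>

definition proj :: "(nat \<Rightarrow> ('a::field^'n) set) \<Rightarrow> nat \<Rightarrow> nat \<Rightarrow> 'a^'n \<Rightarrow> 'a^'n" where
  "proj A l i v = (THE u. (\<forall>i\<le>l. u i \<in> A i) \<and> (\<forall>i>l. u i = 0) \<and> v = (\<Sum>i\<le>l. u i)) i"

locale dsum =
  fixes A :: "nat \<Rightarrow> ('a::field^'n::finite) set" and l :: nat
  assumes dsum_UNIV: "is_dsum A l UNIV" and subspace: "\<And>i. i \<le> l \<Longrightarrow> vec.subspace (A i)"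
begin

abbreviation "P \<equiv> proj A l"

lemma proj_unique:
  assumes "\<forall>i\<le>l. u i \<in> A i" "\<forall>i>l. u i = 0" "v = (\<Sum>i\<le>l. u i)"
  shows "P i v = u i"
proof -
  have "\<exists>!u. (\<forall>i\<le>l. u i \<in> A i) \<and> (\<forall>i>l. u i = 0) \<and> v = (\<Sum>i\<le>l. u i)"
    using dsum_UNIV by (simp add: is_dsum_def)
  then have "(THE u. (\<forall>i\<le>l. u i \<in> A i) \<and> (\<forall>i>l. u i = 0) \<and> v = (\<Sum>i\<le>l. u i)) = u"
    using assms by (intro the1_equality) blast+
  then show ?thesis
    by (simp add: proj_def)
qed

lemma proj_in: "i \<le> l \<Longrightarrow> P i v \<in> A i"
  and proj_beyond: "l < i \<Longrightarrow> P i v = 0"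
  and sum_proj: "(\<Sum>i\<le>l. P i v) = v"
proof -
  have "\<exists>!u. (\<forall>i\<le>l. u i \<in> A i) \<and> (\<forall>i>l. u i = 0) \<and> v = (\<Sum>i\<le>l. u i)"
    using dsum_UNIV by (simp add: is_dsum_def)
  from theI'[OF this]
  show "i \<le> l \<Longrightarrow> P i v \<in> A i" "l < i \<Longrightarrow> P i v = 0" "(\<Sum>i\<le>l. P i v) = v"
    unfolding proj_def by simp_all
qed

lemma proj_add: "P i (v + w) = P i v + P i w"
  using proj_in proj_beyond sum_proj[of v] sum_proj[of w]
  by (intro proj_unique) (simp_all add: vec.subspace_add subspace sum.distrib)

lemma proj_scale: "P i (c *s v) = c *s P i v"
  using proj_in proj_beyond sum_proj[of v]
  by (intro proj_unique) (auto simp: vec.subspace_scale subspace vec.scale_sum_right[symmetric])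

lemma proj_zero [simp]: "P i 0 = 0"
  using proj_scale[of i 0 0] by simp

lemma proj_linear: "Vector_Spaces.linear (*s) (*s) (P i)"
  unfolding Vector_Spaces.linear_iff using proj_add proj_scale vec.vector_space_axioms by blast

lemma proj_diff: "P i (v - w) = P i v - P i w"
  using proj_add[of i "v - w" w] by (simp add: algebra_simps)

lemma proj_self: "j \<le> l \<Longrightarrow> v \<in> A j \<Longrightarrow> P i v = (if i = j then v else 0)"
  by (rule proj_unique) (auto simp: subspace vec.subspace_0)

lemma proj_eq_0_on_span: "x \<in> vec.span (\<Union>j\<in>J. A j) \<Longrightarrow> J \<subseteq> {..l} \<Longrightarrow> i \<notin> J \<Longrightarrow> P i x = 0"
  by (rule vec.linear_eq_0_on_span[OF proj_linear]) (auto simp: proj_self)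

lemma proj_commute:
  assumes "\<And>i v. i \<le> l \<Longrightarrow> v \<in> A i \<Longrightarrow> X *v v \<in> A i"
  shows "P i (X *v v) = X *v P i v"
  using assms proj_in proj_beyond sum_proj[of v]
  by (intro proj_unique) (auto simp: vec.sum[symmetric])

definition projm :: "nat \<Rightarrow> 'a^'n^'n" where
  "projm i = matrix (P i)"

lemma projm_mv: "projm i *v v = P i v"
  unfolding projm_def by (rule matrix_works[OF proj_linear])

lemma projm_commute:
  assumes "\<And>i v. i \<le> l \<Longrightarrow> v \<in> A i \<Longrightarrow> X *v v \<in> A i"
  shows "projm i ** X = X ** projm i"
  by (simp add: matrix_eq matrix_vector_mul_assoc[symmetric] projm_mv proj_commute[OF assms])

end

section \<open>Socle layers of g_m-modules\<close>

lemma inv_sub_span: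
  assumes "\<And>X g. X \<in> Ops \<Longrightarrow> g \<in> G \<Longrightarrow> X *v g \<in> vec.span G"
  shows "inv_sub Ops (vec.span G)"
  unfolding inv_sub_def using assms by (auto intro: mv_in_span)

lemma gsub_socle_step:
  assumes "gsub m M N"
  shows "gsub m M (socle_step m M N)"
proof -
  let ?G = "N \<union> \<Union>{U. gsub m M U \<and> N \<subset> U \<and>
      (\<forall>U'. gsub m M U' \<and> N \<subseteq> U' \<and> U' \<subseteq> U \<longrightarrow> U' = N \<or> U' = U)}"
  have "X *v g \<in> U" if "X \<in> gm_ops m M" "gsub m M U" "g \<in> U" for X g U
    using that by (simp add: gsub_def inv_sub_def)
  then have "inv_sub (gm_ops m M) (vec.span ?G)"
    using assms by (intro inv_sub_span) (blast intro: vec.span_base)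
  then show ?thesis
    by (simp add: socle_step_def gsub_def)
qed

lemma gsub_soc: "gsub m M (soc m M k)"
proof (induction k)
  case 0
  show ?case
    using vec.subspace_0 by (simp add: soc_def gsub_def inv_sub_def vec.subspace_def)
next
  case (Suc k)
  then show ?case
    by (simp add: soc_def gsub_socle_step)
qed

lemma gsub_imp_inv_sub_sl2: "gsub m M U \<Longrightarrow> inv_sub {gE M, gH M, gF M} U"
  by (simp add: gsub_def inv_sub_def gm_ops_def)

lemma irred_extension_cases:
  assumes N: "vec.subspace N" and A: "irred_sl2 E H F A"
    and U: "inv_sub {E, H, F} U" "N \<subseteq> U" "U \<subseteq> vec.span (N \<union> A)"
  shows "U = N \<or> U = vec.span (N \<union> A)"
proof -
  have A_inv: "inv_sub {E, H, F} A"
    using A by (simp add: irred_sl2_def)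
  then have A_sub: "vec.subspace A"
    by (simp add: inv_sub_def)
  have U_sub: "vec.subspace U"
    using U(1) by (simp add: inv_sub_def)
  have "inv_sub {E, H, F} (U \<inter> A)"
    unfolding inv_sub_def
  proof (intro conjI ballI)
    show "vec.subspace (U \<inter> A)"
      using U_sub A_sub by (rule vec.subspace_inter)
    fix X v assume "X \<in> {E, H, F}" "v \<in> U \<inter> A"
    with U(1) A_inv show "X *v v \<in> U \<inter> A"
      unfolding inv_sub_def by blast
  qed
  moreover have "\<forall>U'. inv_sub {E, H, F} U' \<and> U' \<subseteq> A \<longrightarrow> U' = {0} \<or> U' = A"
    using A by (simp add: irred_sl2_def)
  ultimately have "U \<inter> A = {0} \<or> U \<inter> A = A"
    by blast
  then show ?thesis
  proof
    assume UA: "U \<inter> A = {0}"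
    have "U \<subseteq> N"
    proof
      fix w assume "w \<in> U"
      moreover have "vec.span (N \<union> A) = {x + y |x y. x \<in> N \<and> y \<in> A}"
        using vec.span_Un[of N A] N A_sub by (simp add: vec.span_eq_iff[THEN iffD2])
      ultimately obtain x y where xy: "x \<in> N" "y \<in> A" "w = x + y"
        using U(3) by blast
      have "w - x \<in> U"
        using xy(1) U(2) by (intro vec.subspace_diff[OF U_sub \<open>w \<in> U\<close>]) blast
      then have "y \<in> U \<inter> A"
        using xy(2,3) by simp
      with UA have "y = 0"
        by blast
      with xy show "w \<in> N"
        by simp
    qed
    with U(2) show ?thesis
      by blast
  next
    assume "U \<inter> A = A"
    then have "vec.span (N \<union> A) \<subseteq> U"
      using U(2) by (intro vec.span_minimal U_sub) auto
    with U(3) show ?thesis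
      by blast
  qed
qed

locale dmod =
  fixes m :: nat and M :: "('a::field_char_0, 'n::finite) gmod" and l :: nat
    and a :: "nat \<Rightarrow> nat" and A :: "nat \<Rightarrow> ('a^'n) set"
  assumes gm_module: "is_gm_module m M" and socle_decomp: "socle_decomp m M l a A"
begin

abbreviation "E \<equiv> gE M"
abbreviation "H \<equiv> gH M"
abbreviation "F \<equiv> gF M"
abbreviation "X \<equiv> gX M"

lemma irred_layer: "i \<le> l \<Longrightarrow> irred_hw E H F (a i) (A i)"
  using socle_decomp by (simp add: socle_decomp_def)

lemma inv_sub_layer: "i \<le> l \<Longrightarrow> inv_sub {E, H, F} (A i)"
  using irred_layer by (simp add: irred_hw_def irred_sl2_def)

lemma soc_eq: "k \<le> Suc l \<Longrightarrow> soc m M k = vec.span (\<Union>i<k. A i)"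
  using socle_decomp by (simp add: socle_decomp_def)

sublocale dsum A l
  using socle_decomp inv_sub_layer by unfold_locales (auto simp: socle_decomp_def inv_sub_def)

lemma sl2: "sl2 E H F"
proof unfold_locales
  fix v
  have "br H E = msc 2 E" "br H F = msc (-2) F" "br E F = H"
    using gm_module by (auto simp: is_gm_module_def)
  from this[THEN arg_cong, of "\<lambda>B. B *v v"]
  show "H *v (E *v v) = E *v (H *v v) + 2 *s (E *v v)"
    "H *v (F *v v) = F *v (H *v v) - 2 *s (F *v v)"
    "E *v (F *v v) = F *v (E *v v) + H *v v"
    by (simp_all add: matrix_vector_mult_br matrix_vector_mult_msc algebra_simps)
qed

lemma X_E:
  assumes "k \<le> m"
  shows "X k *v (E *v v)
    = E *v (X k *v v) - (if k = 0 then 0 else of_nat (k * (m - k + 1)) *s (X (k - 1) *v v))"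
proof -
  have "br E (X k) = (if k = 0 then 0 else msc (of_nat (k * (m - k + 1))) (X (k - 1)))"
    using gm_module assms by (simp add: is_gm_module_def)
  from arg_cong[OF this, of "\<lambda>B. B *v v"] show ?thesis
    by (cases "k = 0") (simp_all add: matrix_vector_mult_br matrix_vector_mult_msc algebra_simps)
qed

lemma X_H:
  assumes "k \<le> m"
  shows "X k *v (H *v v) = H *v (X k *v v) - of_int (int m - 2 * int k) *s (X k *v v)"
proof -
  have "br H (X k) = msc (of_int (int m - 2 * int k)) (X k)"
    using gm_module assms by (simp add: is_gm_module_def)
  from arg_cong[OF this, of "\<lambda>B. B *v v"] show ?thesis
    by (simp add: matrix_vector_mult_br matrix_vector_mult_msc algebra_simps)
qed

lemma X_F:
  assumes "k \<le> m"
  shows "X k *v (F *v v) = F *v (X k *v v) - (if k = m then 0 else X (Suc k) *v v)"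
proof -
  have "br F (X k) = (if k = m then 0 else X (Suc k))"
    using gm_module assms by (simp add: is_gm_module_def)
  from arg_cong[OF this, of "\<lambda>B. B *v v"] show ?thesis
    by (cases "k = m") (simp_all add: matrix_vector_mult_br algebra_simps)
qed

lemma proj_E: "P i (E *v v) = E *v P i v"
  and proj_H: "P i (H *v v) = H *v P i v"
  and proj_F: "P i (F *v v) = F *v P i v"
  by (rule proj_commute; use inv_sub_layer in \<open>auto simp: inv_sub_def\<close>)+

lemma layer_X_kernel_inv_sub:
  assumes i: "i \<le> l"
  shows "inv_sub {E, H, F} {v \<in> A i. \<forall>k\<le>m. P (i - 1) (X k *v v) = 0}"
    (is "inv_sub _ ?K")
  unfolding inv_sub_def
proof (intro conjI ballI)
  show "vec.subspace ?K"
    using subspace[OF i]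
    by (auto simp: vec.subspace_def vec.add vec.scale proj_add proj_scale)
  fix B w assume B: "B \<in> {E, H, F}" and w: "w \<in> ?K"
  have "B *v w \<in> A i"
    using inv_sub_layer[OF i] B w by (auto simp: inv_sub_def)
  moreover have "P (i - 1) (X k *v (B *v w)) = 0" if k: "k \<le> m" for k
  proof -
    have w0: "P (i - 1) (X j *v w) = 0" if "j \<le> m" for j
      using w that by simp
    consider "B = E" | "B = H" | "B = F"
      using B by blast
    then show ?thesis
    proof cases
      case 1
      have "P (i - 1) (X k *v (E *v w)) = E *v P (i - 1) (X k *v w)
          - (if k = 0 then 0 else of_nat (k * (m - k + 1)) *s P (i - 1) (X (k - 1) *v w))"
        by (simp only: X_E[OF k] proj_diff proj_E if_distrib[of "P (i - 1)"] proj_zero proj_scale)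
      with 1 show ?thesis
        using w0[of k] w0[of "k - 1"] k by simp
    next
      case 2
      then show ?thesis
        using w0[of k] k by (simp only: X_H[OF k] proj_diff proj_scale proj_H) simp
    next
      case 3
      then show ?thesis
        using w0[of k] w0[of "Suc k"] k
        by (simp only: X_F[OF k] proj_diff proj_F if_distrib[of "P (i - 1)"] proj_zero) simp
    qed
  qed
  ultimately show "B *v w \<in> ?K"
    by blast
qed

lemma gsub_span_soc_layer:
  assumes i: "1 \<le> i" "i \<le> l" and K: "\<forall>v\<in>A i. \<forall>k\<le>m. P (i - 1) (X k *v v) = 0"
  shows "gsub m M (vec.span (soc m M (i - 1) \<union> A i))" (is "gsub m M (vec.span ?G)")
  unfolding gsub_def
proof (rule inv_sub_span)
  fix B g assume B: "B \<in> gm_ops m M" and g: "g \<in> ?G"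
  show "B *v g \<in> vec.span ?G"
  proof (cases "g \<in> soc m M (i - 1) \<or> B \<in> {E, H, F}")
    case True
    then have "B *v g \<in> ?G"
      using gsub_soc[of m M "i - 1"] inv_sub_layer[OF i(2)] B g by (auto simp: gsub_def inv_sub_def)
    then show ?thesis
      by (rule vec.span_base)
  next
    case False
    then obtain k where k: "k \<le> m" "B = X k" and gA: "g \<in> A i"
      using B g by (auto simp: gm_ops_def)
    \<comment> \<open>\<open>X k g\<close> lies in \<open>soc (i+1)\<close>; its layer \<open>i - 1\<close> component vanishes by assumption\<close>
    have "g \<in> soc m M (Suc i)"
      using soc_eq[of "Suc i"] i gA by (auto intro: vec.span_base)
    then have y: "X k *v g \<in> vec.span (\<Union>j\<in>{..<Suc i}. A j)"
      using gsub_soc[of m M "Suc i"] soc_eq[of "Suc i"] i k by (auto simp: gsub_def inv_sub_def gm_ops_def)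
    have "P j (X k *v g) \<in> vec.span ?G" if "j \<le> l" for j
    proof -
      consider "j < i - 1" | "j = i - 1" | "j = i" | "i < j"
        by linarith
      then show ?thesis
      proof cases
        case 1
        then have "P j (X k *v g) \<in> soc m M (i - 1)"
          using soc_eq[of "i - 1"] i proj_in[OF that] by (auto intro: vec.span_base)
        then show ?thesis
          by (auto intro: vec.span_base)
      next
        case 4
        then have "P j (X k *v g) = 0"
          using proj_eq_0_on_span[OF y, of j] i(2) by (simp add: lessThan_Suc_atMost)
        then show ?thesis
          by (simp add: vec.span_zero)
      qed (use K k gA proj_in[OF that] in \<open>auto simp: vec.span_zero intro: vec.span_base\<close>)
    qed
    then have "(\<Sum>j\<le>l. P j (X k *v g)) \<in> vec.span ?G"
      by (intro vec.span_sum) auto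
    then show ?thesis
      using k(2) by (simp add: sum_proj)
  qed
qed

lemma layer_inter_soc:
  assumes "i \<le> l" "v \<in> A i" "v \<in> soc m M i"
  shows "v = 0"
proof -
  have "P i v = 0"
    by (rule proj_eq_0_on_span[of v "{..<i}"]) (use assms soc_eq[of i] in auto)
  then show ?thesis
    using proj_self[OF assms(1,2), of i] by simp
qed

lemma eq_0_if_X_proj_pred_eq_0:
  assumes i: "1 \<le> i" "i \<le> l" and v: "v \<in> A i" and "\<forall>k\<le>m. P (i - 1) (X k *v v) = 0"
  shows "v = 0"
proof -
  let ?K = "{v \<in> A i. \<forall>k\<le>m. P (i - 1) (X k *v v) = 0}"
  have irr: "irred_sl2 E H F (A i)"
    using irred_layer[OF i(2)] by (simp add: irred_hw_def)
  then have "?K = {0} \<or> ?K = A i"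
    using layer_X_kernel_inv_sub[OF i(2)] unfolding irred_sl2_def by blast
  moreover have "?K \<noteq> A i"
  proof
    assume KA: "?K = A i"
    let ?N = "soc m M (i - 1)" and ?U = "vec.span (soc m M (i - 1) \<union> A i)"
    \<comment> \<open>then \<open>soc (i - 1) + A i\<close> would be a submodule with simple quotient, so \<open>A i \<subseteq> soc i\<close>\<close>
    have N_sub: "vec.subspace ?N"
      using gsub_soc[of m M "i - 1"] by (simp add: gsub_def inv_sub_def)
    have U_gsub: "gsub m M ?U"
      using KA by (intro gsub_span_soc_layer[OF i]) blast
    have "?N \<subseteq> ?U"
      by (rule subset_trans[OF _ vec.span_superset]) simp
    have "A i \<subseteq> soc m M i"
    proof (cases "?N = ?U")
      case True
      have "A i \<subseteq> ?U"
        by (rule subset_trans[OF _ vec.span_superset]) simp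
      also have "\<dots> = ?N"
        using True by simp
      also have "\<dots> \<subseteq> soc m M i"
      proof -
        have "vec.span (\<Union>j<i - 1. A j) \<subseteq> vec.span (\<Union>j<i. A j)"
          by (intro vec.span_mono UN_mono) auto
        then show ?thesis
          using soc_eq[of "i - 1"] soc_eq[of i] i by simp
      qed
      finally show ?thesis .
    next
      case False
      have "\<forall>U. gsub m M U \<and> ?N \<subseteq> U \<and> U \<subseteq> ?U \<longrightarrow> U = ?N \<or> U = ?U"
        using irred_extension_cases[OF N_sub irr] gsub_imp_inv_sub_sl2 by blast
      then have "?U \<subseteq> socle_step m M ?N"
        using U_gsub \<open>?N \<subseteq> ?U\<close> False unfolding socle_step_def
        by (intro subset_trans[OF _ vec.span_superset]) blast
      also have "socle_step m M ?N = soc m M i"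
        using i by (cases i) (simp_all add: soc_def)
      finally have "?U \<subseteq> soc m M i" .
      moreover have "A i \<subseteq> ?U"
        by (rule subset_trans[OF _ vec.span_superset]) simp
      ultimately show ?thesis
        by blast
    qed
    moreover have "A i \<noteq> {0}"
      using irr by (simp add: irred_sl2_def)
    then obtain z where z: "z \<in> A i" "z \<noteq> 0"
      using vec.subspace_0[OF subspace[OF i(2)]] by blast
    ultimately show False
      using layer_inter_soc[OF i(2) z(1)] by blast
  qed
  ultimately have "?K = {0}"
    by blast
  then show ?thesis
    using assms(3,4) by blast
qed

end

section \<open>The spaces S_t\<close>

locale twomod = VM: dmod m M l a A + VN: dmod m N l' b B
  for m :: nat and M :: "('a::field_char_0, 'i::finite) gmod" and l a A
    and N :: "('a, 'j::finite) gmod" and l' b B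
begin

definition tgrade :: "nat \<Rightarrow> ('a^('i \<times> 'j)) set" where
  "tgrade t = vec.span (\<Union>{tsub (A i) (B j) | i j. i \<le> l \<and> j \<le> l' \<and> i + j = t})"

(* tproj t i projects the t-th graded piece onto its summand A i \<otimes> B (t - i). *)
definition tproj :: "nat \<Rightarrow> nat \<Rightarrow> 'a^('i \<times> 'j)^('i \<times> 'j)" where
  "tproj t i = lmat (VM.projm i) ** rmat (VN.projm (t - i))"

lemma tproj_mv: "tproj t i *v T = lmat (VM.projm i) *v (rmat (VN.projm (t - i)) *v T)"
  by (simp add: tproj_def matrix_vector_mul_assoc)

lemma tproj_mv': "tproj t i *v T = rmat (VN.projm (t - i)) *v (lmat (VM.projm i) *v T)"
  by (simp add: tproj_mv lmat_rmat_mv_commute)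

lemma S_space_eq: "S_space m M N A B l l' t = {T \<in> tgrade t. \<forall>k\<le>m. tmat (gX M k) (gX N k) *v T = 0}"
  by (simp add: S_space_def tgrade_def)

lemma subspace_S_space: "vec.subspace (S_space m M N A B l l' t)"
  unfolding vec.subspace_def S_space_eq tgrade_def
  by (auto simp: vec.span_zero vec.span_add vec.span_scale vec.add vec.scale)

lemma lmat_projm_tvec: "i0 \<le> l \<Longrightarrow> u \<in> A i0 \<Longrightarrow>
    lmat (VM.projm i) *v tvec u w = (if i = i0 then tvec u w else 0)"
  by (simp add: lmat_tvec VM.projm_mv VM.proj_self)

lemma rmat_projm_tvec: "j0 \<le> l' \<Longrightarrow> w \<in> B j0 \<Longrightarrow>
    rmat (VN.projm j) *v tvec u w = (if j = j0 then tvec u w else 0)"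
  by (simp add: rmat_tvec VN.projm_mv VN.proj_self)

lemma lmat_projm_beyond: "l < i \<Longrightarrow> lmat (VM.projm i) *v T = 0"
  using tcol_eq_iff[of "lmat (VM.projm i) *v T" 0] by (simp add: tcol_lmat VM.projm_mv VM.proj_beyond)

lemma rmat_projm_beyond: "l' < j \<Longrightarrow> rmat (VN.projm j) *v T = 0"
  using trow_eq_iff[of "rmat (VN.projm j) *v T" 0] by (simp add: trow_rmat VN.projm_mv VN.proj_beyond)

lemma tgrade_components:
  assumes "T \<in> tgrade t"
  shows "\<forall>i\<le>t. rmat (VN.projm (t - i)) *v T = tproj t i *v T"
    and "\<forall>i\<le>t. lmat (VM.projm i) *v T = tproj t i *v T"
    and "T = (\<Sum>i\<le>t. tproj t i *v T)"
proof -
  let ?G = "{T. (\<forall>i\<le>t. rmat (VN.projm (t - i)) *v T = tproj t i *v T)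
    \<and> (\<forall>i\<le>t. lmat (VM.projm i) *v T = tproj t i *v T) \<and> T = (\<Sum>i\<le>t. tproj t i *v T)}"
  have G_sub: "vec.subspace ?G"
    unfolding vec.subspace_def
    by (auto simp: vec.add vec.scale sum.distrib vec.scale_sum_right[symmetric])
  have "tvec u w \<in> ?G" if ij: "i0 \<le> l" "j0 \<le> l'" "i0 + j0 = t" and uw: "u \<in> A i0" "w \<in> B j0"
    for i0 j0 u w
  proof -
    have C: "tproj t i *v tvec u w = (if i = i0 then tvec u w else 0)" if "i \<le> t" for i
      using that ij uw by (auto simp: tproj_mv rmat_projm_tvec lmat_projm_tvec)
    have "(\<Sum>i\<le>t. tproj t i *v tvec u w) = (\<Sum>i\<le>t. if i = i0 then tvec u w else 0)"
      by (rule sum.cong) (simp_all add: C)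
    also have "\<dots> = tvec u w"
      using ij by simp
    finally show ?thesis
      using ij uw by (auto simp: C rmat_projm_tvec lmat_projm_tvec)
  qed
  then have "tsub (A i) (B j) \<subseteq> ?G" if "i \<le> l" "j \<le> l'" "i + j = t" for i j
    unfolding tsub_def using that by (intro vec.span_minimal[OF _ G_sub]) blast
  then have "tgrade t \<subseteq> ?G"
    unfolding tgrade_def by (intro vec.span_minimal[OF _ G_sub]) blast
  then show "\<forall>i\<le>t. rmat (VN.projm (t - i)) *v T = tproj t i *v T"
    "\<forall>i\<le>t. lmat (VM.projm i) *v T = tproj t i *v T" "T = (\<Sum>i\<le>t. tproj t i *v T)"
    using assms by blast+
qed

lemma tproj_in_tsub: "i \<le> l \<Longrightarrow> t - i \<le> l' \<Longrightarrow> tproj t i *v T \<in> tsub (A i) (B (t - i))"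
  unfolding tproj_mv
  by (rule lmat_rmat_in_tsub) (simp_all add: VM.projm_mv VN.projm_mv VM.proj_in VN.proj_in)

lemma tproj_beyond: "l < i \<or> l' < t - i \<Longrightarrow> tproj t i *v T = 0"
  by (auto simp: tproj_mv' lmat_projm_beyond rmat_projm_beyond)

lemma tmat_tproj:
  assumes "X \<in> {gE M, gH M, gF M}" "Y \<in> {gE N, gH N, gF N}"
  shows "tmat X Y *v (tproj t i *v T) = tproj t i *v (tmat X Y *v T)"
proof -
  have "VM.projm i ** X = X ** VM.projm i" for i
    by (rule VM.projm_commute) (use VM.inv_sub_layer assms(1) in \<open>auto simp: inv_sub_def\<close>)
  moreover have "VN.projm j ** Y = Y ** VN.projm j" for j
    by (rule VN.projm_commute) (use VN.inv_sub_layer assms(2) in \<open>auto simp: inv_sub_def\<close>)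
  ultimately show ?thesis
    by (simp add: tproj_mv tmat_mv vec.add lmat_lmat_mv rmat_rmat_mv lmat_rmat_mv_commute)
qed

(* Applying the (i - 1, t - i) projection to X\<^sub>k T = 0 relates the components i and i - 1 of T. *)
lemma X_links_tprojs:
  assumes T: "T \<in> tgrade t" and X: "tmat (gX M k) (gX N k) *v T = 0" and i: "1 \<le> i" "i \<le> t"
  shows "lmat (VM.projm (i - 1) ** gX M k) *v (tproj t i *v T)
    + rmat (VN.projm (t - i) ** gX N k) *v (tproj t (i - 1) *v T) = 0"
proof -
  have "0 = lmat (VM.projm (i - 1)) *v (rmat (VN.projm (t - i)) *v (tmat (gX M k) (gX N k) *v T))"
    using X by simp
  also have "\<dots> = lmat (VM.projm (i - 1) ** gX M k) *v (rmat (VN.projm (t - i)) *v T)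
      + rmat (VN.projm (t - i) ** gX N k) *v (lmat (VM.projm (i - 1)) *v T)"
    by (simp add: tmat_mv vec.add lmat_lmat_mv rmat_rmat_mv lmat_rmat_mv_commute)
  also have "rmat (VN.projm (t - i)) *v T = tproj t i *v T"
    using tgrade_components(1)[OF T] i(2) by simp
  also have "lmat (VM.projm (i - 1)) *v T = tproj t (i - 1) *v T"
    using tgrade_components(2)[OF T] i by simp
  finally show ?thesis
    by simp
qed

lemma tproj_eq_0_if_left:
  assumes i: "1 \<le> i" and "\<forall>k\<le>m. lmat (VM.projm (i - 1) ** gX M k) *v (tproj t i *v T) = 0"
  shows "tproj t i *v T = 0"
proof (cases "i \<le> l")
  case True
  have "tcol q (tproj t i *v T) = 0" for q
  proof (rule VM.eq_0_if_X_proj_pred_eq_0[OF i True])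
    show "tcol q (tproj t i *v T) \<in> A i"
      unfolding tproj_mv tcol_lmat VM.projm_mv using VM.proj_in[OF True] .
    show "\<forall>k\<le>m. VM.P (i - 1) (gX M k *v tcol q (tproj t i *v T)) = 0"
    proof (intro allI impI)
      fix k assume "k \<le> m"
      then have "tcol q (lmat (VM.projm (i - 1) ** gX M k) *v (tproj t i *v T)) = 0"
        using assms(2) by simp
      then show "VM.P (i - 1) (gX M k *v tcol q (tproj t i *v T)) = 0"
        by (simp add: tcol_lmat matrix_vector_mul_assoc[symmetric] VM.projm_mv)
    qed
  qed
  then show ?thesis
    using tcol_eq_iff[of "tproj t i *v T" 0] by simp
qed (simp add: tproj_beyond)

lemma tproj_eq_0_if_right:
  assumes j: "1 \<le> j" "j \<le> t"
    and "\<forall>k\<le>m. rmat (VN.projm (j - 1) ** gX N k) *v (tproj t (t - j) *v T) = 0"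
  shows "tproj t (t - j) *v T = 0"
proof (cases "j \<le> l'")
  case True
  have "trow p (tproj t (t - j) *v T) = 0" for p
  proof (rule VN.eq_0_if_X_proj_pred_eq_0[OF j(1) True])
    show "trow p (tproj t (t - j) *v T) \<in> B j"
      unfolding tproj_mv' trow_rmat VN.projm_mv using VN.proj_in[OF True] j(2) by simp
    show "\<forall>k\<le>m. VN.P (j - 1) (gX N k *v trow p (tproj t (t - j) *v T)) = 0"
    proof (intro allI impI)
      fix k assume "k \<le> m"
      then have "trow p (rmat (VN.projm (j - 1) ** gX N k) *v (tproj t (t - j) *v T)) = 0"
        using assms(3) by simp
      then show "VN.P (j - 1) (gX N k *v trow p (tproj t (t - j) *v T)) = 0"
        by (simp add: trow_rmat matrix_vector_mul_assoc[symmetric] VN.projm_mv)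
    qed
  qed
  then show ?thesis
    using trow_eq_iff[of "tproj t (t - j) *v T" 0] by simp
qed (use j in \<open>simp add: tproj_beyond\<close>)

lemma tproj_eq_0_iff_pred_eq_0:
  assumes T: "T \<in> S_space m M N A B l l' t" and i: "1 \<le> i" "i \<le> t"
  shows "tproj t i *v T = 0 \<longleftrightarrow> tproj t (i - 1) *v T = 0"
proof -
  have T_grade: "T \<in> tgrade t" and X: "\<And>k. k \<le> m \<Longrightarrow> tmat (gX M k) (gX N k) *v T = 0"
    using T by (auto simp: S_space_eq)
  note link = X_links_tprojs[OF T_grade X i]
  show ?thesis
  proof
    assume "tproj t i *v T = 0"
    then have "rmat (VN.projm (Suc (t - i) - 1) ** gX N k) *v (tproj t (t - Suc (t - i)) *v T) = 0"
      if "k \<le> m" for k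
      using link[OF that] i by (simp add: Suc_diff_Suc)
    then have "tproj t (t - Suc (t - i)) *v T = 0"
      using i by (intro tproj_eq_0_if_right) auto
    then show "tproj t (i - 1) *v T = 0"
      using i by (simp add: Suc_diff_Suc)
  next
    assume "tproj t (i - 1) *v T = 0"
    then have "lmat (VM.projm (i - 1) ** gX M k) *v (tproj t i *v T) = 0" if "k \<le> m" for k
      using link[OF that] by simp
    then show "tproj t i *v T = 0"
      using i by (intro tproj_eq_0_if_left) auto
  qed
qed

lemma S_space_eq_0_if_tproj_eq_0:
  assumes T: "T \<in> S_space m M N A B l l' t" and "i0 \<le> t" "tproj t i0 *v T = 0"
  shows "T = 0"
proof -
  have comp_iff: "tproj t i *v T = 0 \<longleftrightarrow> tproj t 0 *v T = 0" if "i \<le> t" for i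
    using that
  proof (induction i)
    case (Suc i)
    have "tproj t (Suc i) *v T = 0 \<longleftrightarrow> tproj t i *v T = 0"
      using tproj_eq_0_iff_pred_eq_0[OF T, of "Suc i"] Suc.prems by simp
    also have "\<dots> \<longleftrightarrow> tproj t 0 *v T = 0"
      using Suc by simp
    finally show ?case .
  qed simp
  have "tproj t 0 *v T = 0"
    using comp_iff[OF assms(2)] assms(3) by blast
  then have "tproj t i *v T = 0" if "i \<le> t" for i
    using comp_iff[OF that] by blast
  moreover have "T = (\<Sum>i\<le>t. tproj t i *v T)"
    using T by (intro tgrade_components(3)) (simp add: S_space_eq)
  ultimately show ?thesis
    by simp
qed

end

context twomod
begin

abbreviation "Et \<equiv> tmat (gE M) (gE N)"
abbreviation "Ht \<equiv> tmat (gH M) (gH N)"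
abbreviation "Ft \<equiv> tmat (gF M) (gF N)"

sublocale sl2_pair "gE M" "gH M" "gF M" "gE N" "gH N" "gF N"
  by (intro sl2_pair.intro VM.sl2 VN.sl2)

lemma S_space_beyond: "min l l' < t \<Longrightarrow> S_space m M N A B l l' t = {0}"
proof -
  assume t: "min l l' < t"
  have "T = 0" if T: "T \<in> S_space m M N A B l l' t" for T
  proof (cases "l' < t")
    case True
    then show ?thesis
      using S_space_eq_0_if_tproj_eq_0[OF T, of 0] tproj_beyond by simp
  next
    case False
    then show ?thesis
      using S_space_eq_0_if_tproj_eq_0[OF T, of t] tproj_beyond t by simp
  qed
  then show ?thesis
    using vec.subspace_0[OF subspace_S_space] by blast
qed

context
  fixes t \<mu> :: nat
  assumes t: "t \<le> min l l'"
begin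

lemma tproj_hw:
  assumes "T \<in> S_space m M N A B l l' t" "Et *v T = 0" "Ht *v T = of_nat \<mu> *s T" "i \<le> t"
  shows "tproj t i *v T \<in> tsub (A i) (B (t - i))" "Et *v (tproj t i *v T) = 0"
    "Ht *v (tproj t i *v T) = of_nat \<mu> *s (tproj t i *v T)"
proof -
  show "tproj t i *v T \<in> tsub (A i) (B (t - i))"
    using assms(4) t by (intro tproj_in_tsub) auto
  show "Et *v (tproj t i *v T) = 0" "Ht *v (tproj t i *v T) = of_nat \<mu> *s (tproj t i *v T)"
    using assms(2,3) by (simp_all add: tmat_tproj vec.scale)
qed

lemma hw_space_eq_span:
  assumes T0: "T0 \<in> S_space m M N A B l l' t" "hw_vec Et Ht \<mu> T0"
  shows "{T \<in> S_space m M N A B l l' t. Et *v T = 0 \<and> Ht *v T = of_nat \<mu> *s T} = vec.span {T0}"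
    (is "?Z = _")
proof
  have "vec.subspace ?Z"
    using subspace_S_space
    by (auto simp: vec.subspace_def vec.add vec.scale vec.scale_right_distrib mult.commute)
  moreover have "T0 \<in> ?Z"
    using T0 by (simp add: hw_vec_def)
  ultimately show "vec.span {T0} \<subseteq> ?Z"
    by (simp add: vec.span_minimal)
  show "?Z \<subseteq> vec.span {T0}"
  proof
    fix T assume "T \<in> ?Z"
    then have T: "T \<in> S_space m M N A B l l' t" "Et *v T = 0" "Ht *v T = of_nat \<mu> *s T"
      by auto
    have T0': "Et *v T0 = 0" "Ht *v T0 = of_nat \<mu> *s T0" "T0 \<noteq> 0"
      using T0(2) by (auto simp: hw_vec_def)
    \<comment> \<open>by multiplicity one, the \<open>(0, t)\<close> components of \<open>T\<close> and \<open>T0\<close> are proportional\<close>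
    have "tproj t 0 *v T0 \<noteq> 0"
      using S_space_eq_0_if_tproj_eq_0[OF T0(1)] T0'(3) by blast
    then have "\<exists>c. tproj t 0 *v T = c *s (tproj t 0 *v T0)"
      by (intro hw_vectors_tensor_proportional[OF VM.irred_layer VN.irred_layer, where \<mu> = "of_nat \<mu>"])
        (use tproj_hw[OF T0(1) T0'(1,2), of 0] tproj_hw[OF T, of 0] t in simp_all)
    then obtain c where c: "tproj t 0 *v T = c *s (tproj t 0 *v T0)"
      by blast
    have "T - c *s T0 \<in> S_space m M N A B l l' t"
      using T(1) T0(1) subspace_S_space by (simp add: vec.subspace_diff vec.subspace_scale)
    moreover have "tproj t 0 *v (T - c *s T0) = 0"
      using c by (simp add: vec.diff vec.scale)
    ultimately have "T = c *s T0"
      using S_space_eq_0_if_tproj_eq_0[of "T - c *s T0" t 0] by simp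
    then show "T \<in> vec.span {T0}"
      by (simp add: vec.span_scale vec.span_base)
  qed
qed

lemma irred_summand_exists:
  assumes T0: "T0 \<in> S_space m M N A B l l' t" "hw_vec Et Ht \<mu> T0" and i: "i \<le> t"
  shows "\<exists>U. U \<subseteq> tsub (A i) (B (t - i)) \<and> irred_hw Et Ht Ft \<mu> U"
proof -
  let ?v = "tproj t i *v T0"
  have v: "?v \<in> tsub (A i) (B (t - i))" "Et *v ?v = 0" "Ht *v ?v = of_nat \<mu> *s ?v"
    using tproj_hw[OF T0(1) _ _ i] T0(2) by (auto simp: hw_vec_def)
  have "?v \<noteq> 0"
    using S_space_eq_0_if_tproj_eq_0[OF T0(1) i] T0(2) by (auto simp: hw_vec_def)
  then have "irred_hw Et Ht Ft \<mu> (hw_span Ft ?v \<mu>)"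
    using sl2.irred_hw_span[OF sl2_tensor[OF VM.sl2 VN.sl2]] v(2,3) by blast
  moreover have "hw_span Ft ?v \<mu> \<subseteq> tsub (A i) (B (t - i))"
    unfolding hw_span_def
  proof (rule vec.span_minimal)
    have "mv_iter Ft j ?v \<in> tsub (A i) (B (t - i))" for j
    proof (induction j)
      case (Suc j)
      show ?case
        unfolding mv_iter_Suc
        by (rule tmat_in_tsub[OF _ _ Suc.IH])
          (use VM.inv_sub_layer VN.inv_sub_layer i t in \<open>auto simp: inv_sub_def\<close>)
    qed (use v in simp)
    then show "(\<lambda>j. mv_iter Ft j ?v) ` {..\<mu>} \<subseteq> tsub (A i) (B (t - i))"
      by auto
  qed (simp add: tsub_def)
  ultimately show ?thesis
    by blast
qed

lemma hw_space_eq_span_sum: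
  assumes T0: "T0 \<in> S_space m M N A B l l' t" "hw_vec Et Ht \<mu> T0"
    and v0: "\<forall>i\<le>t. v0 i \<in> tsub (A i) (B (t - i)) \<and> hw_vec Et Ht \<mu> (v0 i)"
  shows "\<exists>q. (\<forall>i\<le>t. q i \<noteq> 0) \<and>
    {T \<in> S_space m M N A B l l' t. Et *v T = 0 \<and> Ht *v T = of_nat \<mu> *s T} = vec.span {\<Sum>i\<le>t. q i *s v0 i}"
proof -
  have "\<exists>c. tproj t i *v T0 = c *s v0 i" if i: "i \<le> t" for i
    by (intro hw_vectors_tensor_proportional[OF VM.irred_layer VN.irred_layer, where \<mu> = "of_nat \<mu>"])
      (use v0 i t tproj_hw[OF T0(1) _ _ i] T0(2) in \<open>auto simp: hw_vec_def\<close>)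
  then obtain q where q: "\<forall>i\<le>t. tproj t i *v T0 = q i *s v0 i"
    by metis
  have "q i \<noteq> 0" if "i \<le> t" for i
    using S_space_eq_0_if_tproj_eq_0[OF T0(1) that] q that T0(2) by (auto simp: hw_vec_def)
  moreover have "T0 = (\<Sum>i\<le>t. q i *s v0 i)"
  proof -
    have "T0 = (\<Sum>i\<le>t. tproj t i *v T0)"
      using T0(1) by (intro tgrade_components(3)) (simp add: S_space_eq)
    also have "\<dots> = (\<Sum>i\<le>t. q i *s v0 i)"
      using q by simp
    finally show ?thesis .
  qed
  ultimately show ?thesis
    using hw_space_eq_span[OF T0] by (intro exI[of _ q]) simp
qed

end

end

theorem proposition3p2:
  fixes M :: "('a::field_char_0, 'i::finite) gmod" and N :: "('a, 'j::finite) gmod"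
    and m l l' :: nat and a b :: "nat \<Rightarrow> nat"
    and A :: "nat \<Rightarrow> ('a^'i) set" and B :: "nat \<Rightarrow> ('a^'j) set"
  assumes "m \<ge> 1"
    and "is_gm_module m M" and "is_gm_module m N"
    and "uniserial m M" and "uniserial m N"
    and "l \<ge> 1" and "l' \<ge> 1"
    and "socle_decomp m M l a A" and "socle_decomp m N l' b B"
  shows "(\<forall>t > min l l'. S_space m M N A B l l' t = {0}) \<and>
    (\<forall>t \<mu>. 0 < t \<and> t \<le> min l l' \<and>
       (\<exists>T\<in>S_space m M N A B l l' t. hw_vec (tmat (gE M) (gE N)) (tmat (gH M) (gH N)) \<mu> T)
     \<longrightarrow>
       (\<forall>i\<le>t. \<exists>U. U \<subseteq> tsub (A i) (B (t - i)) \<and>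
           irred_hw (tmat (gE M) (gE N)) (tmat (gH M) (gH N)) (tmat (gF M) (gF N)) \<mu> U) \<and>
       vec.dim {T \<in> S_space m M N A B l l' t. tmat (gE M) (gE N) *v T = 0 \<and>
                  tmat (gH M) (gH N) *v T = of_nat \<mu> *s T} = 1 \<and>
       (\<forall>v0. (\<forall>i\<le>t. v0 i \<in> tsub (A i) (B (t - i)) \<and>
                 hw_vec (tmat (gE M) (gE N)) (tmat (gH M) (gH N)) \<mu> (v0 i)) \<longrightarrow>
          (\<exists>q. (\<forall>i\<le>t. q i \<noteq> 0) \<and>
             {T \<in> S_space m M N A B l l' t. tmat (gE M) (gE N) *v T = 0 \<and>
                  tmat (gH M) (gH N) *v T = of_nat \<mu> *s T}
             = vec.span {\<Sum>i\<le>t. q i *s v0 i})))"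
proof -
  interpret twomod m M l a A N l' b B
    using assms by (simp add: twomod_def dmod_def)
  show ?thesis (is "?beyond \<and> (\<forall>t \<mu>. ?hyp t \<mu> \<longrightarrow> ?concl t \<mu>)")
  proof (rule conjI; intro allI impI)
    fix t assume "min l l' < t"
    then show "S_space m M N A B l l' t = {0}"
      by (rule S_space_beyond)
  next
    fix t \<mu> assume "?hyp t \<mu>"
    then obtain T0 where t: "t \<le> min l l'"
      and T0: "T0 \<in> S_space m M N A B l l' t" "hw_vec Et Ht \<mu> T0"
      by blast
    have "vec.dim (vec.span {T0}) = 1"
      using T0(2) by (simp add: hw_vec_def vec.dim_span)
    then show "?concl t \<mu>"
      using irred_summand_exists[OF t T0] hw_space_eq_span[OF t T0] hw_space_eq_span_sum[OF t T0]
      by simp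
  qed
qed

end
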